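(* Let $(\Sigma,\partial\Sigma)$ be a weighted metric graph with boundary, let $\Gamma$ be an additive subgroup of $\mathbb R$ containing the lengths of all edges of $\Sigma$, let $p,q\in\{0,1\}$, let $\omega\in\mathcal A^{p,q}(\Sigma,\partial\Sigma)$ and $x\in\Sigma$. Then there exist a neighbourhood $U\subset\Sigma$ of $x$ which is a subgraph with $\bar\Gamma$-rational vertices, a $(\mathbb Z,\Gamma)$-harmonic tropicalization $h\colon U\to\mathbb R^n$ of $(U,\partial U)$, and a smooth Lagerberg form $\eta\in\mathcal A^{p,q}(\mathbb R^n)$ such that $h^*\eta=\omega|_U$. Moreover, if $x$ is not a vertex of valency $1$ lying outside $\partial\Sigma$, then $U$ and $h$ can be chosen independently of $\omega$.
   Context: Weighted metric graph with boundary $(\Sigma,\partial\Sigma)$: finite multigraph without loop edges, oriented edges $e$ with tail $e^-$, head $e^+$, length $\ell(e)>0$, parametrization $t_e\colon[0,\ell(e)]\to e$ ($t_e(0)=e^-$, $t_{\bar e}(x)=t_e(\ell(e)-x)$), weight $w(e)=w(\bar e)\in\mathbb Z_{>0}$, boundary $\partial\Sigma\subset V(\Sigma)$; subdivisions are allowed freely. Smooth forms $\mathcal A^{p,q}(\Sigma,\partial\Sigma)$: as usual, $\mathcal A^{0,0}$ = continuous functions smooth on edges with, at interior vertices $v$: constant near $v$ if valency 1; $w(e_1)^nf^{(n)}_{e_1}(v)=(-1)^nw(e_2)^nf^{(n)}_{e_2}(v)$ for all $n$ if valency 2 (derivatives w.r.t. $t_{e_i}$); $\sum_{e^-=v}w(e)\frac{df}{dt_e}(v)=0$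 if valency $\ge3$. $\mathcal A^{1,0}$, $\mathcal A^{0,1}$: $(f_e\,d't_e)$, $(f_e\,d''t_e)$ with $f_{\bar e}=-f_e$, vanishing near interior valency-1 vertices, $(w(e_1)f_{e_1},-w(e_2)f_{e_2})$ satisfying the valency-2 condition above, $\sum_{e^-=v}w(e)f_e(v)=0$ at interior valency $\ge3$. $\mathcal A^{1,1}$: $(f_e\,d't_ed''t_e)$, $f_{\bar e}=f_e$, vanishing near interior valency-1 vertices, $(w(e_1)^2f_{e_1},w(e_2)^2f_{e_2})$ satisfying the valency-2 condition. $\bar\Gamma$ is the saturation $\{x\in\mathbb R:nx\in\Gamma\text{ for some }n\ge1\}$ if $\Gamma$ is discrete, and $\bar\Gamma=\Gamma$ otherwise; a point is $\bar\Gamma$-rational if it is $t_e(y)$ with $y\in\bar\Gamma$. A subgraph $U$ is a union of vertices and closed edges of a subdivision, with the induced weighted metric structure and boundary $\partial U=(U\cap\partial\Sigma)\cup$ (relative boundary of $U$ in $\Sigma$); $\omega|_U$ is the restriction of the edge functions. A harmonic function on $(U,\partial U)$ is a smooth function whose restriction to each edge is affine ($f\circ t_e(x)=ax+b$, slope $a$). It is $(\mathbb Z,\Gamma)$-harmonic if all slopes are integers and, for each edge $e\subset U$ contained in the edge $e'$ of $\Sigma$, the affine extension of $f|_e$ to $e'$ takes values in $\Gamma$ at the endpoints of $e'$. A $(\mathbb Z,\Gamma)$-harmonic tropicalization is $h=(h_1,\dots,h_n)$ with all $h_i$ $(\mathbb Z,\Gamma)$-harmonic. Lagerberg forms on $\mathbb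 R^n$: $\sum g_{IJ}\,d'x_I\wedge d''x_J$ with smooth $g_{IJ}$. Pullback: $h^*g=g\circ h$; $h^*\sum_ig_i\,d'x_i=(\sum_i\frac{dh_i}{dt_e}\,g_i\circ h\;d't_e)$, similarly for $d''$; $h^*\sum_{i,j}g_{ij}\,d'x_i\wedge d''x_j=(\sum_{i,j}\frac{dh_i}{dt_e}\frac{dh_j}{dt_e}\,g_{ij}\circ h\;d't_ed''t_e)$. *)

theory Defs
  imports "HOL-Analysis.Analysis"
begin

text \<open>Each edge id e carries a reference orientation
  (tail e = e^-, head e = e^+); the reversed oriented edge is handled through the
  parametrization t_{bar e}(x) = t_e(len e - x).\<close>

record ('v, 'e) wmg =
  verts :: "'v set"
  edges :: "'e set"
  tail  :: "'e \<Rightarrow> 'v"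
  head  :: "'e \<Rightarrow> 'v"
  len   :: "'e \<Rightarrow> real"
  wt    :: "'e \<Rightarrow> nat"
  bdry  :: "'v set"

definition wmg_ok :: "('v, 'e) wmg \<Rightarrow> bool" where
  "wmg_ok G \<longleftrightarrow> finite (verts G) \<and> finite (edges G) \<and> bdry G \<subseteq> verts G \<and>
     (\<forall>e\<in>edges G. tail G e \<in> verts G \<and> head G e \<in> verts G \<and> tail G e \<noteq> head G e
        \<and> len G e > 0 \<and> wt G e > 0)"

text \<open>Points of the metric graph: vertices, and interior points of edges
  (Inner e s with 0 < s < len e, measured by t_e).\<close>

datatype ('v, 'e) pt = Vert 'v | Inner 'e real

definition pts :: "('v, 'e) wmg \<Rightarrow> ('v, 'e) pt set" where
  "pts G = Vert ` verts G \<union> {Inner e s | e s. e \<in> edges G \<and> 0 < s \<and> s < len G e}"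

definition param :: "('v, 'e) wmg \<Rightarrow> 'e \<Rightarrow> real \<Rightarrow> ('v, 'e) pt" where
  "param G e s = (if s \<le> 0 then Vert (tail G e)
                  else if len G e \<le> s then Vert (head G e) else Inner e s)"

definition incident :: "('v, 'e) wmg \<Rightarrow> 'v \<Rightarrow> 'e set" where
  "incident G v = {e \<in> edges G. tail G e = v \<or> head G e = v}"

definition valency :: "('v, 'e) wmg \<Rightarrow> 'v \<Rightarrow> nat" where
  "valency G v = card (incident G v)"

definition on_edge :: "('v, 'e) wmg \<Rightarrow> ('v, 'e) pt set \<Rightarrow> 'e \<Rightarrow> real set" where
  "on_edge G U e = {s \<in> {0..len G e}. param G e s \<in> U}"

definition nbhd :: "('v, 'e) wmg \<Rightarrow> ('v, 'e) pt set \<Rightarrow> ('v, 'e) pt \<Rightarrow> bool" where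
  "nbhd G U x \<longleftrightarrow> x \<in> U \<and> (\<exists>\<epsilon>>0. \<forall>e\<in>edges G. \<forall>s0\<in>{0..len G e}. \<forall>s\<in>{0..len G e}.
        param G e s0 = x \<and> \<bar>s - s0\<bar> < \<epsilon> \<longrightarrow> param G e s \<in> U)"

definition add_subgroup :: "real set \<Rightarrow> bool" where
  "add_subgroup \<Gamma> \<longleftrightarrow> 0 \<in> \<Gamma> \<and> (\<forall>x\<in>\<Gamma>. \<forall>y\<in>\<Gamma>. x + y \<in> \<Gamma>) \<and> (\<forall>x\<in>\<Gamma>. - x \<in> \<Gamma>)"

definition gbar :: "real set \<Rightarrow> real set" where
  "gbar \<Gamma> = (if discrete \<Gamma> then {x. \<exists>n::nat. n \<ge> 1 \<and> real n * x \<in> \<Gamma>} else \<Gamma>)"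

text \<open>U is a subgraph (union of vertices and closed edges of a subdivision) all of whose
  vertices are \<Gamma>bar-rational: on every edge its trace is a finite union of closed
  intervals (possibly points) with \<Gamma>bar-rational end points.\<close>
definition rat_subgraph :: "('v, 'e) wmg \<Rightarrow> real set \<Rightarrow> ('v, 'e) pt set \<Rightarrow> bool" where
  "rat_subgraph G \<Gamma> U \<longleftrightarrow> U \<subseteq> pts G \<and>
     (\<forall>e\<in>edges G. \<exists>P. finite P \<and>
        (\<forall>(a, b)\<in>P. 0 \<le> a \<and> a \<le> b \<and> b \<le> len G e \<and> a \<in> gbar \<Gamma> \<and> b \<in> gbar \<Gamma>) \<and>
        on_edge G U e = (\<Union>(a, b)\<in>P. {a..b}))"

definition smooth_R :: "(real \<Rightarrow> real) \<Rightarrow> bool" where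
  "smooth_R g \<longleftrightarrow> (\<forall>k x. (deriv ^^ k) g differentiable (at x))"

text \<open>A (p,q)-form is given by its vertex values (only relevant for p = q = 0, where the
  form is a function) and by its edge functions f e w.r.t. the reference orientation t_e
  (components f_e in front of 1, d't_e, d''t_e or d't_e d''t_e).\<close>
type_synonym ('v, 'e) form = "('v \<Rightarrow> real) \<times> ('e \<Rightarrow> real \<Rightarrow> real)"

fun ptval :: "('v, 'e) form \<Rightarrow> ('v, 'e) pt \<Rightarrow> real" where
  "ptval \<omega> (Vert v) = fst \<omega> v"
| "ptval \<omega> (Inner e s) = snd \<omega> e s"

text \<open>Edge function of the outgoing orientation at v (t_e if e^- = v, else t_{bar e}),
  using f_{bar e} = (-1)^(p+q) f_e.\<close>
definition out_fun :: "('v, 'e) wmg \<Rightarrow> nat \<Rightarrow> ('e \<Rightarrow> real \<Rightarrow> real) \<Rightarrow> 'v \<Rightarrow> 'e \<Rightarrow> real \<Rightarrow> real" where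
  "out_fun G m f v e s = (if tail G e = v then f e s else (-1) ^ m * f e (len G e - s))"

definition vertex_cond :: "('v, 'e) wmg \<Rightarrow> nat \<Rightarrow> nat \<Rightarrow> ('e \<Rightarrow> real \<Rightarrow> real) \<Rightarrow> 'v \<Rightarrow> bool" where
  "vertex_cond G p q f v \<longleftrightarrow>
    (let I = incident G v; m = p + q; w = (\<lambda>e. real (wt G e)) in
     \<exists>\<epsilon>>0. \<exists>g. (\<forall>e\<in>I. \<epsilon> \<le> len G e \<and> smooth_R (g e) \<and>
                     (\<forall>s\<in>{0..\<epsilon>}. g e s = out_fun G m f v e s)) \<and>
       (card I = 1 \<longrightarrow> (\<forall>e\<in>I. \<forall>s\<in>{0..\<epsilon>}. g e s = (if m = 0 then g e 0 else 0))) \<and>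
       (card I = 2 \<longrightarrow> (\<forall>e1\<in>I. \<forall>e2\<in>I. e1 \<noteq> e2 \<longrightarrow> (\<forall>k.
            w e1 ^ k * (deriv ^^ k) (\<lambda>s. w e1 ^ m * g e1 s) 0
          = (-1) ^ k * w e2 ^ k * (deriv ^^ k) (\<lambda>s. (-1) ^ m * w e2 ^ m * g e2 s) 0))) \<and>
       (card I \<ge> 3 \<longrightarrow> (m = 0 \<longrightarrow> (\<Sum>e\<in>I. w e * deriv (g e) 0) = 0) \<and>
                        (m = 1 \<longrightarrow> (\<Sum>e\<in>I. w e * g e 0) = 0)))"

text \<open>Smooth (p,q)-forms on (U, \<partial>U), U a subgraph; for U = pts G this is
  A^{p,q}(\<Sigma>, \<partial>\<Sigma>). The interior vertices of U (those not in
  \<partial>U = (U \<inter> \<partial>\<Sigma>) \<union> relative boundary) are the vertices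
  v \<notin> bdry G of which U is a neighbourhood (further subdivision points in the interior
  of U only impose smoothness along the edge).\<close>
definition smooth_form :: "('v, 'e) wmg \<Rightarrow> ('v, 'e) pt set \<Rightarrow> nat \<Rightarrow> nat \<Rightarrow> ('v, 'e) form \<Rightarrow> bool" where
  "smooth_form G U p q \<omega> \<longleftrightarrow>
     (\<forall>e\<in>edges G. \<forall>a b. a < b \<and> {a..b} \<subseteq> on_edge G U e \<longrightarrow>
        (\<exists>g. smooth_R g \<and> (\<forall>s\<in>{a..b}. snd \<omega> e s = g s))) \<and>
     (p = 0 \<and> q = 0 \<longrightarrow> (\<forall>e\<in>edges G. \<forall>s\<in>on_edge G U e. snd \<omega> e s = ptval \<omega> (param G e s))) \<and>
     (\<forall>v\<in>verts G - bdry G. nbhd G U (Vert v) \<longrightarrow> vertex_cond G p q (snd \<omega>) v)"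

definition fun_form :: "('v, 'e) wmg \<Rightarrow> (('v, 'e) pt \<Rightarrow> real) \<Rightarrow> ('v, 'e) form" where
  "fun_form G F = (\<lambda>v. F (Vert v), \<lambda>e s. F (param G e s))"

definition ZG_harmonic :: "('v, 'e) wmg \<Rightarrow> real set \<Rightarrow> ('v, 'e) pt set \<Rightarrow> (('v, 'e) pt \<Rightarrow> real) \<Rightarrow> bool" where
  "ZG_harmonic G \<Gamma> U F \<longleftrightarrow> smooth_form G U 0 0 (fun_form G F) \<and>
     (\<forall>e\<in>edges G. \<forall>a b. a < b \<and> {a..b} \<subseteq> on_edge G U e \<longrightarrow>
        (\<exists>c d. c \<in> \<int> \<and> d \<in> \<Gamma> \<and> c * len G e + d \<in> \<Gamma> \<and>
               (\<forall>s\<in>{a..b}. F (param G e s) = c * s + d)))"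

definition ZG_trop :: "('v, 'e) wmg \<Rightarrow> real set \<Rightarrow> ('v, 'e) pt set \<Rightarrow> nat \<Rightarrow> (nat \<Rightarrow> ('v, 'e) pt \<Rightarrow> real) \<Rightarrow> bool" where
  "ZG_trop G \<Gamma> U n h \<longleftrightarrow> (\<forall>i<n. ZG_harmonic G \<Gamma> U (h i))"

text \<open>Points of R^n are represented as functions nat \<Rightarrow> real of which only the
  coordinates < n matter.\<close>

definition pdiff :: "nat \<Rightarrow> ((nat \<Rightarrow> real) \<Rightarrow> real) \<Rightarrow> (nat \<Rightarrow> real) \<Rightarrow> real" where
  "pdiff i g = (\<lambda>x. deriv (\<lambda>t. g (x(i := t))) (x i))"

definition cont_n :: "nat \<Rightarrow> ((nat \<Rightarrow> real) \<Rightarrow> real) \<Rightarrow> bool" where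
  "cont_n n g \<longleftrightarrow> (\<forall>x. \<forall>\<epsilon>>0. \<exists>\<delta>>0. \<forall>y. (\<forall>i<n. \<bar>y i - x i\<bar> < \<delta>) \<longrightarrow> \<bar>g y - g x\<bar> < \<epsilon>)"

definition smooth_Rn :: "nat \<Rightarrow> ((nat \<Rightarrow> real) \<Rightarrow> real) \<Rightarrow> bool" where
  "smooth_Rn n g \<longleftrightarrow> (\<forall>x y. (\<forall>i<n. x i = y i) \<longrightarrow> g x = g y) \<and>
     (\<forall>is. set is \<subseteq> {..<n} \<longrightarrow> cont_n n (foldr pdiff is g) \<and>
        (\<forall>i<n. \<forall>x. (\<lambda>t. foldr pdiff is g (x(i := t))) differentiable (at (x i))))"

definition idx :: "nat \<Rightarrow> nat \<Rightarrow> nat set" where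
  "idx p n = (if p = 0 then {0} else {..<n})"

text \<open>A Lagerberg (p,q)-form (p,q \<in> {0,1}) \<eta> = \<Sum> \<eta> i j d'x_i d''x_j, where only the
  indices in idx p n \<times> idx q n are used (index 0 stands for the empty multi-index).\<close>
definition lagerberg_smooth :: "nat \<Rightarrow> nat \<Rightarrow> nat \<Rightarrow> (nat \<Rightarrow> nat \<Rightarrow> (nat \<Rightarrow> real) \<Rightarrow> real) \<Rightarrow> bool" where
  "lagerberg_smooth n p q \<eta> \<longleftrightarrow> (\<forall>i\<in>idx p n. \<forall>j\<in>idx q n. smooth_Rn n (\<eta> i j))"

definition pullback_eq :: "('v, 'e) wmg \<Rightarrow> ('v, 'e) pt set \<Rightarrow> nat \<Rightarrow> (nat \<Rightarrow> ('v, 'e) pt \<Rightarrow> real)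
    \<Rightarrow> nat \<Rightarrow> nat \<Rightarrow> (nat \<Rightarrow> nat \<Rightarrow> (nat \<Rightarrow> real) \<Rightarrow> real) \<Rightarrow> ('v, 'e) form \<Rightarrow> bool" where
  "pullback_eq G U n h p q \<eta> \<omega> \<longleftrightarrow>
    (if p = 0 \<and> q = 0 then (\<forall>y\<in>U. \<eta> 0 0 (\<lambda>k. h k y) = ptval \<omega> y)
     else (\<forall>e\<in>edges G. \<forall>a b. a < b \<and> {a..b} \<subseteq> on_edge G U e \<longrightarrow> (\<forall>s\<in>{a..b}.
        (let sl = (\<lambda>i. vector_derivative (\<lambda>t. h i (param G e t)) (at s within {a..b})) in
         (\<Sum>i\<in>idx p n. \<Sum>j\<in>idx q n.
            (if p = 1 then sl i else 1) * (if q = 1 then sl j else 1) *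
            \<eta> i j (\<lambda>k. h k (param G e s))) = snd \<omega> e s))))"

end

theory Submission
  imports Defs
begin

text \<open>Away from the vertices the arc length of an edge is a (Z,\<Gamma>)-harmonic coordinate, and a
  form on a segment is the pullback of a form in one variable. At a vertex v we take a star of
  radius r \<in> \<Gamma>bar and coordinates that are linear on each ray, with integer slope vectors C(e)
  balanced at v, so that they are harmonic; a form is then a pullback h^*\<eta> as soon as \<eta>
  restricted to each ray t \<mapsto> t C(e) reproduces the edge function of the form.
  At a boundary vertex the C(e) can be taken linearly independent. At an interior vertex of valency
  two one coordinate with slopes w2 and -w1 suffices: \<eta> glues the two rescaled edge functions, and
  the valency-two condition on the form says exactly that the glued function is smooth. At valency
  n + 1 \<ge> 3 we take C(e_k) = w_n e_k for k < n and C(e_n) = -(w_0, ..., w_(n-1)); the obvious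
  candidate for \<eta> is then wrong only on the last ray, by a function vanishing at 0 to the order
  guaranteed by the balancing condition on the form, and a Hadamard-type correction term repairs it.
  At an interior vertex of valency one the form is constant or zero near v, so n = 0 works, but only
  on a star whose size depends on the form.\<close>

section \<open>The saturation of \<Gamma>\<close>

lemma add_subgroup_of_nat_mult:
  assumes "add_subgroup \<Gamma>" "a \<in> \<Gamma>" shows "real k * a \<in> \<Gamma>"
proof (induction k)
  case 0 then show ?case using assms unfolding add_subgroup_def by simp
next
  case (Suc k)
  then have "real k * a + a \<in> \<Gamma>" using assms unfolding add_subgroup_def by blast
  then show ?case by (simp add: algebra_simps)
qed

lemma add_subgroup_of_int_mult:
  assumes "add_subgroup \<Gamma>" "a \<in> \<Gamma>" shows "real_of_int k * a \<in> \<Gamma>"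
proof (cases "k \<ge> 0")
  case True
  then show ?thesis using add_subgroup_of_nat_mult[OF assms, of "nat k"] by simp
next
  case False
  have "- (real (nat (-k)) * a) \<in> \<Gamma>"
    using add_subgroup_of_nat_mult[OF assms] assms(1) unfolding add_subgroup_def by blast
  then show ?thesis using False by simp
qed

lemma add_subgroup_Ints_mult:
  "add_subgroup \<Gamma> \<Longrightarrow> a \<in> \<Gamma> \<Longrightarrow> c \<in> \<int> \<Longrightarrow> c * a \<in> \<Gamma>"
  using add_subgroup_of_int_mult by (auto elim: Ints_cases)

lemma add_subgroup_gbar:
  assumes \<Gamma>: "add_subgroup \<Gamma>" shows "add_subgroup (gbar \<Gamma>)"
proof (cases "discrete \<Gamma>")
  case True
  have "x + y \<in> gbar \<Gamma>" if xy: "x \<in> gbar \<Gamma>" "y \<in> gbar \<Gamma>" for x y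
  proof -
    obtain n m :: nat where nm: "n \<ge> 1" "real n * x \<in> \<Gamma>" "m \<ge> 1" "real m * y \<in> \<Gamma>"
      using xy True unfolding gbar_def by auto
    have "real m * (real n * x) + real n * (real m * y) \<in> \<Gamma>"
      using add_subgroup_of_nat_mult[OF \<Gamma> nm(2)] add_subgroup_of_nat_mult[OF \<Gamma> nm(4)] \<Gamma>
      unfolding add_subgroup_def by blast
    moreover have "real m * (real n * x) + real n * (real m * y) = real (n * m) * (x + y)"
      by (simp add: algebra_simps)
    ultimately show ?thesis using True nm unfolding gbar_def by (auto intro!: exI[of _ "n * m"])
  qed
  moreover have "- x \<in> gbar \<Gamma>" if x: "x \<in> gbar \<Gamma>" for x
  proof -
    obtain n :: nat where n: "n \<ge> 1" "real n * x \<in> \<Gamma>"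
      using x True unfolding gbar_def by auto
    then have "- (real n * x) \<in> \<Gamma>" using \<Gamma> unfolding add_subgroup_def by blast
    then show ?thesis using True n unfolding gbar_def by (auto intro!: exI[of _ n])
  qed
  moreover have "0 \<in> gbar \<Gamma>"
    using \<Gamma> True unfolding gbar_def add_subgroup_def by (auto intro!: exI[of _ 1])
  ultimately show ?thesis unfolding add_subgroup_def by blast
next
  case False
  then show ?thesis using \<Gamma> unfolding gbar_def by simp
qed

lemma subset_gbar: "add_subgroup \<Gamma> \<Longrightarrow> \<Gamma> \<subseteq> gbar \<Gamma>"
  unfolding gbar_def by (auto intro!: exI[of _ 1])

lemma gbar_zero: "add_subgroup \<Gamma> \<Longrightarrow> 0 \<in> gbar \<Gamma>"
  using add_subgroup_gbar unfolding add_subgroup_def by blast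

lemma gbar_add: "add_subgroup \<Gamma> \<Longrightarrow> x \<in> gbar \<Gamma> \<Longrightarrow> y \<in> gbar \<Gamma> \<Longrightarrow> x + y \<in> gbar \<Gamma>"
  using add_subgroup_gbar unfolding add_subgroup_def by blast

lemma gbar_diff: "add_subgroup \<Gamma> \<Longrightarrow> x \<in> gbar \<Gamma> \<Longrightarrow> y \<in> gbar \<Gamma> \<Longrightarrow> x - y \<in> gbar \<Gamma>"
  using add_subgroup_gbar unfolding add_subgroup_def by (metis diff_conv_add_uminus)

lemma gbar_of_int_mult: "add_subgroup \<Gamma> \<Longrightarrow> x \<in> gbar \<Gamma> \<Longrightarrow> real_of_int k * x \<in> gbar \<Gamma>"
  using add_subgroup_of_int_mult[OF add_subgroup_gbar] by blast

lemma gbar_small_positive: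
  assumes \<Gamma>: "add_subgroup \<Gamma>" and l: "l \<in> \<Gamma>" "l > 0" and \<epsilon>: "\<epsilon> > 0"
  shows "\<exists>r\<in>gbar \<Gamma>. 0 < r \<and> r < \<epsilon>"
proof (cases "discrete \<Gamma>")
  case True
  define N :: nat where "N = nat \<lceil>l / \<epsilon>\<rceil> + 1"
  have N: "N \<ge> 1" "l / \<epsilon> < real N" unfolding N_def by linarith+
  then have "l / real N < \<epsilon>" using \<epsilon> by (simp add: field_simps)
  moreover have "l / real N \<in> gbar \<Gamma>" using True N l unfolding gbar_def by (auto intro!: exI[of _ N])
  ultimately show ?thesis using N l by (intro bexI[of _ "l / real N"]) auto
next
  case False
  then obtain x where x: "x \<in> \<Gamma>" "\<not> x isolated_in \<Gamma>" unfolding discrete_def by blast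
  then obtain y where y: "y \<in> \<Gamma>" "dist x y < \<epsilon>" "y \<noteq> x"
    using \<epsilon> unfolding isolated_in_dist_Ex_iff by blast
  have "x - y \<in> \<Gamma>" "y - x \<in> \<Gamma>" using x y \<Gamma> unfolding add_subgroup_def
    by (metis diff_conv_add_uminus)+
  then have "\<bar>x - y\<bar> \<in> gbar \<Gamma>" using False unfolding gbar_def by (simp add: abs_if)
  then show ?thesis using y by (auto simp: dist_real_def intro!: bexI[of _ "\<bar>x - y\<bar>"])
qed

section \<open>Smooth functions of one variable\<close>

lemma deriv_funpow_Suc: "(deriv ^^ Suc k) f = (deriv ^^ k) (deriv f)"
  by (simp add: funpow_Suc_right del: funpow.simps)

lemma smooth_R_iff: "smooth_R f \<longleftrightarrow> (\<forall>x. f differentiable (at x)) \<and> smooth_R (deriv f)"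
  unfolding smooth_R_def by (metis deriv_funpow_Suc funpow_0 not0_implies_Suc)

lemma smooth_R_differentiable: "smooth_R f \<Longrightarrow> f differentiable (at x)"
  unfolding smooth_R_def by (metis funpow_0)

lemma smooth_R_deriv: "smooth_R f \<Longrightarrow> smooth_R (deriv f)"
  using smooth_R_iff by blast

lemma smooth_R_funpow: "smooth_R f \<Longrightarrow> smooth_R ((deriv ^^ k) f)"
  by (induction k) (auto simp: smooth_R_deriv)

lemma smooth_R_DERIV: "smooth_R f \<Longrightarrow> (f has_real_derivative deriv f x) (at x)"
  using smooth_R_differentiable DERIV_deriv_iff_real_differentiable by blast

lemma smooth_R_isCont: "smooth_R f \<Longrightarrow> isCont f x"
  using smooth_R_differentiable differentiable_imp_continuous_within by blast

lemma deriv_funpow_const: "(deriv ^^ k) (\<lambda>s::real. c) = (\<lambda>s. if k = 0 then c else 0)"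
  by (induction k) simp_all

lemma smooth_R_const: "smooth_R (\<lambda>x. c)"
  unfolding smooth_R_def deriv_funpow_const by simp

lemma deriv_affine: "deriv (\<lambda>s::real. a * s + b) = (\<lambda>_. a)"
  by (auto intro!: DERIV_imp_deriv derivative_eq_intros)

lemma smooth_R_linear: "smooth_R (\<lambda>x. a * x + b)"
  by (subst smooth_R_iff) (auto simp: deriv_affine smooth_R_const)

lemma deriv_funpow_linear_at_0:
  "(deriv ^^ k) (\<lambda>s. a * s) 0 = (if k = 1 then a else (0::real))"
proof (cases k)
  case (Suc k')
  have "(deriv ^^ k) (\<lambda>s. a * s + 0) = (deriv ^^ k') (\<lambda>_. a)"
    unfolding Suc deriv_funpow_Suc deriv_affine ..
  then show ?thesis using Suc by (simp add: deriv_funpow_const)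
qed simp

lemma deriv_funpow_affine:
  assumes "smooth_R f"
  shows "(deriv ^^ k) (\<lambda>x. c * f (a * x + b)) = (\<lambda>x. c * a ^ k * (deriv ^^ k) f (a * x + b))"
proof (induction k)
  case 0 then show ?case by simp
next
  case (Suc k)
  have "DERIV (\<lambda>x. c * a ^ k * (deriv ^^ k) f (a * x + b)) y :>
        c * a ^ Suc k * (deriv ^^ Suc k) f (a * y + b)" for y
  proof -
    have d: "DERIV ((deriv ^^ k) f) (a * y + b) :> (deriv ^^ Suc k) f (a * y + b)"
      using smooth_R_DERIV[OF smooth_R_funpow[OF assms, of k]] by simp
    have "DERIV (\<lambda>x. a * x + b) y :> a"
      by (auto intro!: derivative_eq_intros)
    from DERIV_chain2[OF d this] have
      "DERIV (\<lambda>x. (deriv ^^ k) f (a * x + b)) y :> (deriv ^^ Suc k) f (a * y + b) * a" .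
    from DERIV_cmult[OF this, of "c * a ^ k"] show ?thesis by (simp add: algebra_simps)
  qed
  moreover have "(deriv ^^ Suc k) (\<lambda>x. c * f (a * x + b)) = deriv (\<lambda>x. c * a ^ k * (deriv ^^ k) f (a * x + b))"
    using Suc.IH by simp
  ultimately show ?case by (auto simp: fun_eq_iff intro!: DERIV_imp_deriv)
qed

lemma smooth_R_affine:
  assumes "smooth_R f" shows "smooth_R (\<lambda>x. c * f (a * x + b))"
  unfolding smooth_R_def
proof (intro allI)
  fix k y
  have d: "DERIV ((deriv ^^ k) f) (a * y + b) :> deriv ((deriv ^^ k) f) (a * y + b)"
    using smooth_R_DERIV[OF smooth_R_funpow[OF assms, of k]] by simp
  have "DERIV (\<lambda>x. a * x + b) y :> a"
    by (auto intro!: derivative_eq_intros)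
  from DERIV_chain2[OF d this]
  have "(\<lambda>x. (deriv ^^ k) f (a * x + b)) differentiable at y"
    by (auto simp: real_differentiable_def)
  then show "(deriv ^^ k) (\<lambda>x. c * f (a * x + b)) differentiable at y"
    unfolding deriv_funpow_affine[OF assms] by (auto intro: differentiable_mult differentiable_const)
qed

lemma smooth_R_cmult: "smooth_R f \<Longrightarrow> smooth_R (\<lambda>x. c * f x)"
  using smooth_R_affine[of f c 1 0] by simp

lemma smooth_R_scale: "smooth_R f \<Longrightarrow> smooth_R (\<lambda>x. f (a * x))"
  using smooth_R_affine[of f 1 a 0] by simp

lemma deriv_funpow_cmult: "smooth_R f \<Longrightarrow> (deriv ^^ k) (\<lambda>x. c * f x) = (\<lambda>x. c * (deriv ^^ k) f x)"
  using deriv_funpow_affine[of f k c 1 0] by simp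

lemma deriv_funpow_add:
  assumes "smooth_R f" "smooth_R g"
  shows "(deriv ^^ k) (\<lambda>x. f x + g x) = (\<lambda>x. (deriv ^^ k) f x + (deriv ^^ k) g x)"
proof (induction k)
  case 0 then show ?case by simp
next
  case (Suc k)
  have "deriv (\<lambda>x. (deriv ^^ k) f x + (deriv ^^ k) g x) y = (deriv ^^ Suc k) f y + (deriv ^^ Suc k) g y" for y
    using DERIV_add[OF smooth_R_DERIV[OF smooth_R_funpow[OF assms(1)]] smooth_R_DERIV[OF smooth_R_funpow[OF assms(2)]]]
    by (intro DERIV_imp_deriv) simp
  moreover have "(deriv ^^ Suc k) (\<lambda>x. f x + g x) = deriv (\<lambda>x. (deriv ^^ k) f x + (deriv ^^ k) g x)"
    using Suc.IH by simp
  ultimately show ?case by (simp add: fun_eq_iff)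
qed

lemma smooth_R_add: assumes "smooth_R f" "smooth_R g" shows "smooth_R (\<lambda>x. f x + g x)"
  unfolding smooth_R_def deriv_funpow_add[OF assms]
  using smooth_R_differentiable[OF smooth_R_funpow[OF assms(1)]]
    smooth_R_differentiable[OF smooth_R_funpow[OF assms(2)]]
  by (auto intro: differentiable_add)

lemma smooth_R_minus: "smooth_R f \<Longrightarrow> smooth_R g \<Longrightarrow> smooth_R (\<lambda>x. f x - g x)"
  using smooth_R_add[of f "\<lambda>x. (-1) * g x"] smooth_R_cmult[of g "-1"] by simp

lemma smooth_R_sum:
  "finite A \<Longrightarrow> (\<And>i. i \<in> A \<Longrightarrow> smooth_R (f i)) \<Longrightarrow> smooth_R (\<lambda>x. \<Sum>i\<in>A. f i x)"
  by (induction A rule: finite_induct) (auto simp: smooth_R_const intro: smooth_R_add)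

lemma DERIV_unique_right:
  fixes f g :: "real \<Rightarrow> real"
  assumes "DERIV f s :> f'" "DERIV g s :> g'" "\<delta> > 0" "\<And>x. x \<in> {s..s + \<delta>} \<Longrightarrow> f x = g x"
  shows "f' = g'"
proof -
  have "(g has_field_derivative f') (at s within {s..s + \<delta>})"
    by (rule has_field_derivative_transform_within[OF has_field_derivative_at_within[OF assms(1)] assms(3)])
      (use assms in auto)
  moreover have "(g has_field_derivative g') (at s within {s..s + \<delta>})"
    using assms(2) by (rule has_field_derivative_at_within)
  ultimately show ?thesis
    using assms(3) by (intro vector_derivative_unique_within_closed_interval[of s "s + \<delta>" s])
      (auto simp: has_real_derivative_iff_has_vector_derivative)
qed

lemma smooth_R_right_jets_eq:
  assumes f: "smooth_R f" and g: "smooth_R g" and \<epsilon>: "\<epsilon> > 0" and eq: "\<forall>s\<in>{0..\<epsilon>}. f s = g s"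
  shows "(deriv ^^ k) f 0 = (deriv ^^ k) g 0"
proof -
  have "\<forall>s\<in>{0..<\<epsilon>}. (deriv ^^ k) f s = (deriv ^^ k) g s"
  proof (induction k)
    case 0 then show ?case using eq by auto
  next
    case (Suc k)
    show ?case
    proof
      fix s assume s: "s \<in> {0..<\<epsilon>}"
      have "(deriv ^^ k) f x = (deriv ^^ k) g x" if x: "x \<in> {s..s + (\<epsilon> - s) / 2}" for x
      proof -
        have "x \<in> {0..<\<epsilon>}" using x s by (auto simp: field_simps)
        then show ?thesis using Suc.IH by blast
      qed
      then have "deriv ((deriv ^^ k) f) s = deriv ((deriv ^^ k) g) s"
        using s by (intro DERIV_unique_right[OF smooth_R_DERIV[OF smooth_R_funpow[OF f]]
            smooth_R_DERIV[OF smooth_R_funpow[OF g]], of "(\<epsilon> - s) / 2"]) auto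
      then show "(deriv ^^ Suc k) f s = (deriv ^^ Suc k) g s" by simp
    qed
  qed
  then show ?thesis using \<epsilon> by simp
qed

lemma DERIV_glue:
  assumes f: "smooth_R f" and g: "smooth_R g" and eq: "f 0 = g 0" "deriv f 0 = deriv g 0"
  shows "DERIV (\<lambda>y. if 0 \<le> y then f y else g y) y :> (if 0 \<le> y then deriv f y else deriv g y)"
proof -
  let ?h = "\<lambda>y. if 0 \<le> y then f y else g y"
  consider "y > 0" | "y < 0" | "y = 0" by linarith
  then show ?thesis
  proof cases
    case 1
    have "eventually (\<lambda>x. x \<in> {0<..}) (nhds y)" using 1 by (intro eventually_nhds_in_open) auto
    then have "eventually (\<lambda>x. ?h x = f x) (nhds y)" by eventually_elim auto
    then show ?thesis using smooth_R_DERIV[OF f, of y] 1 by (simp add: DERIV_cong_ev)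
  next
    case 2
    have "eventually (\<lambda>x. x \<in> {..<0}) (nhds y)" using 2 by (intro eventually_nhds_in_open) auto
    then have "eventually (\<lambda>x. ?h x = g x) (nhds y)" by eventually_elim auto
    then show ?thesis using smooth_R_DERIV[OF g, of y] 2 by (simp add: DERIV_cong_ev)
  next
    case 3
    have lf: "((\<lambda>h. (f h - f 0) / h) \<longlongrightarrow> deriv f 0) (at_right 0)"
      using smooth_R_DERIV[OF f, of 0] unfolding DERIV_def filterlim_at_split by simp
    have lg: "((\<lambda>h. (g h - g 0) / h) \<longlongrightarrow> deriv f 0) (at_left 0)"
      using smooth_R_DERIV[OF g, of 0] eq(2) unfolding DERIV_def filterlim_at_split by simp
    have "((\<lambda>h. (?h (0 + h) - ?h 0) / h) \<longlongrightarrow> deriv f 0) (at_left 0)"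
    proof (rule Lim_transform_eventually[OF lg])
      have "eventually (\<lambda>h. h \<in> {-1<..<0}) (at_left (0::real))" by (rule eventually_at_left_real) simp
      then show "eventually (\<lambda>h. (g h - g 0) / h = (?h (0 + h) - ?h 0) / h) (at_left 0)"
        by eventually_elim (use eq in auto)
    qed
    moreover have "((\<lambda>h. (?h (0 + h) - ?h 0) / h) \<longlongrightarrow> deriv f 0) (at_right 0)"
    proof (rule Lim_transform_eventually[OF lf])
      show "eventually (\<lambda>h. (f h - f 0) / h = (?h (0 + h) - ?h 0) / h) (at_right 0)"
        using eventually_at_right_less[of "0::real"] by eventually_elim auto
    qed
    ultimately have "((\<lambda>h. (?h (0 + h) - ?h 0) / h) \<longlongrightarrow> deriv f 0) (at 0)"
      by (rule filterlim_split_at)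
    then have "DERIV ?h 0 :> deriv f 0" unfolding DERIV_def .
    with 3 show ?thesis by simp
  qed
qed

lemma smooth_R_glue:
  assumes f: "smooth_R f" and g: "smooth_R g" and jets: "\<And>k. (deriv ^^ k) f 0 = (deriv ^^ k) g 0"
  shows "smooth_R (\<lambda>y. if 0 \<le> y then f y else g y)"
proof -
  have eq: "(deriv ^^ k) (\<lambda>y. if 0 \<le> y then f y else g y)
         = (\<lambda>y. if 0 \<le> y then (deriv ^^ k) f y else (deriv ^^ k) g y)" for k
  proof (induction k)
    case 0 then show ?case by (simp add: fun_eq_iff)
  next
    case (Suc k)
    have j1: "deriv ((deriv ^^ k) f) 0 = deriv ((deriv ^^ k) g) 0" using jets[of "Suc k"] by simp
    have d: "DERIV (\<lambda>y. if 0 \<le> y then (deriv ^^ k) f y else (deriv ^^ k) g y) y :>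
        (if 0 \<le> y then deriv ((deriv ^^ k) f) y else deriv ((deriv ^^ k) g) y)" for y
      by (rule DERIV_glue[OF smooth_R_funpow[OF f] smooth_R_funpow[OF g] jets[of k] j1])
    have eq: "(deriv ^^ Suc k) (\<lambda>y. if 0 \<le> y then f y else g y) =
       deriv (\<lambda>y. if 0 \<le> y then (deriv ^^ k) f y else (deriv ^^ k) g y)"
      using Suc.IH by simp
    show ?case
    proof (rule ext)
      fix y
      have "deriv (\<lambda>y. if 0 \<le> y then (deriv ^^ k) f y else (deriv ^^ k) g y) y =
        (if 0 \<le> y then deriv ((deriv ^^ k) f) y else deriv ((deriv ^^ k) g) y)"
        by (rule DERIV_imp_deriv[OF d])
      then show "(deriv ^^ Suc k) (\<lambda>y. if 0 \<le> y then f y else g y) y =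
        (if 0 \<le> y then (deriv ^^ Suc k) f y else (deriv ^^ Suc k) g y)"
        using eq by simp
    qed
  qed
  show ?thesis unfolding smooth_R_def eq
  proof (intro allI)
    fix k y
    have j1: "deriv ((deriv ^^ k) f) 0 = deriv ((deriv ^^ k) g) 0" using jets[of "Suc k"] by simp
    from DERIV_glue[OF smooth_R_funpow[OF f] smooth_R_funpow[OF g] jets[of k] j1, of y]
    show "(\<lambda>y. if 0 \<le> y then (deriv ^^ k) f y else (deriv ^^ k) g y) differentiable at y"
      unfolding real_differentiable_def by blast
  qed
qed

lemma DERIV_integral_moment:
  assumes D: "smooth_R D"
  shows "((\<lambda>t. integral {0..1} (\<lambda>s. s ^ k * (deriv ^^ Suc k) D (s * t))) has_real_derivative
      integral {0..1} (\<lambda>s. s ^ Suc k * (deriv ^^ Suc (Suc k)) D (s * t))) (at t)"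
proof -
  have cont: "continuous_on UNIV ((deriv ^^ k) D)" for k
    using smooth_R_isCont[OF smooth_R_funpow[OF D]] by (simp add: continuous_at_imp_continuous_on)
  have "((\<lambda>t. integral (cbox 0 1) (\<lambda>s. s ^ k * (deriv ^^ Suc k) D (s * t))) has_real_derivative
    integral (cbox 0 1) (\<lambda>s. s ^ Suc k * (deriv ^^ Suc (Suc k)) D (s * t))) (at t within UNIV)"
  proof (rule leibniz_rule_field_derivative[where f = "\<lambda>x s. s ^ k * (deriv ^^ Suc k) D (s * x)"])
    fix x s :: real
    have "DERIV ((deriv ^^ Suc k) D) (s * x) :> (deriv ^^ Suc (Suc k)) D (s * x)"
      using smooth_R_DERIV[OF smooth_R_funpow[OF D, of "Suc k"]] by simp
    from DERIV_cmult[OF DERIV_chain2[OF this DERIV_cmult_Id[of s]], of "s ^ k"]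
    show "((\<lambda>x. s ^ k * (deriv ^^ Suc k) D (s * x)) has_real_derivative
        s ^ Suc k * (deriv ^^ Suc (Suc k)) D (s * x)) (at x within UNIV)"
      by (simp add: algebra_simps)
  next
    fix x :: real
    have "continuous_on {0..1} (\<lambda>s. s ^ k * (deriv ^^ Suc k) D (s * x))"
      by (intro continuous_intros continuous_on_compose2[OF cont[of "Suc k"]]) auto
    then show "(\<lambda>s. s ^ k * (deriv ^^ Suc k) D (s * x)) integrable_on cbox 0 1"
      by (simp add: integrable_continuous_real interval_cbox[symmetric])
  next
    have "continuous_on UNIV (\<lambda>p::real \<times> real. snd p ^ Suc k * (deriv ^^ Suc (Suc k)) D (snd p * fst p))"
      by (intro continuous_intros continuous_on_compose2[OF cont[of "Suc (Suc k)"]]) auto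
    then show "continuous_on (UNIV \<times> cbox 0 1) (\<lambda>(x, s). s ^ Suc k * (deriv ^^ Suc (Suc k)) D (s * x))"
      by (auto simp: case_prod_beta intro: continuous_on_subset)
  qed auto
  then show ?thesis by (simp add: interval_cbox[symmetric])
qed

lemma smooth_R_hadamard:
  assumes D: "smooth_R D"
  shows "\<exists>E. smooth_R E \<and> (\<forall>t. D t = D 0 + t * E t)"
proof -
  define E where "E t = integral {0..1} (\<lambda>s. deriv D (s * t))" for t
  have E_derivs: "(deriv ^^ k) E = (\<lambda>t. integral {0..1} (\<lambda>s. s ^ k * (deriv ^^ Suc k) D (s * t)))" for k
  proof (induction k)
    case 0 then show ?case by (simp add: E_def fun_eq_iff)
  next
    case (Suc k)
    have "(deriv ^^ Suc k) E = deriv (\<lambda>t. integral {0..1} (\<lambda>s. s ^ k * (deriv ^^ Suc k) D (s * t)))"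
      using Suc.IH by simp
    then show ?case by (intro ext) (simp only:, rule DERIV_imp_deriv, rule DERIV_integral_moment[OF D])
  qed
  have "smooth_R E"
    unfolding smooth_R_def E_derivs using DERIV_integral_moment[OF D] by (auto simp: real_differentiable_def)
  moreover have "D t = D 0 + t * E t" for t
  proof -
    have "((\<lambda>s. t * deriv D (s * t)) has_integral (D (1 * t) - D (0 * t))) {0..1}"
    proof (rule fundamental_theorem_of_calculus)
      fix s :: real
      from DERIV_chain2[OF smooth_R_DERIV[OF D] DERIV_cmult_Id[of t], of s]
      show "((\<lambda>s. D (s * t)) has_vector_derivative t * deriv D (s * t)) (at s within {0..1})"
        by (auto simp: has_real_derivative_iff_has_vector_derivative[symmetric] mult.commute
            intro: has_field_derivative_at_within)
    qed simp
    then have "integral {0..1} (\<lambda>s. t * deriv D (s * t)) = D (1 * t) - D (0 * t)"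
      by (rule integral_unique)
    then have "integral {0..1} (\<lambda>s. t * deriv D (s * t)) = D t - D 0" by simp
    then show ?thesis by (simp add: E_def)
  qed
  ultimately show ?thesis by blast
qed

lemma smooth_R_hadamard2:
  assumes D: "smooth_R D" and "D 0 = 0" "deriv D 0 = 0"
  shows "\<exists>E. smooth_R E \<and> (\<forall>t. D t = t * t * E t)"
proof -
  obtain E1 where E1: "smooth_R E1" "\<forall>t. D t = D 0 + t * E1 t" using smooth_R_hadamard[OF D] by blast
  have "D = (\<lambda>t. t * E1 t)" using E1 assms(2) by auto
  have "DERIV (\<lambda>t. t * E1 t) 0 :> 1 * E1 0 + deriv E1 0 * 0"
    using DERIV_mult[OF DERIV_ident smooth_R_DERIV[OF E1(1), of 0]] by simp
  then have "DERIV D 0 :> E1 0" using \<open>D = _\<close> by simp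
  then have "E1 0 = 0" using assms(3) DERIV_imp_deriv by metis
  obtain E2 where E2: "smooth_R E2" "\<forall>t. E1 t = E1 0 + t * E2 t" using smooth_R_hadamard[OF E1(1)] by blast
  have "D t = t * t * E2 t" for t
  proof -
    have a: "D t = D 0 + t * E1 t" using E1(2) by blast
    have b: "E1 t = E1 0 + t * E2 t" using E2(2) by blast
    show ?thesis unfolding a b \<open>E1 0 = 0\<close> assms(2) by simp
  qed
  then show ?thesis using E2(1) by blast
qed

section \<open>Smooth functions on R^n\<close>

definition nb :: "nat \<Rightarrow> (nat \<Rightarrow> real) \<Rightarrow> (nat \<Rightarrow> real) filter" where
  "nb n x = (INF d\<in>{0<..}. principal {y. \<forall>i<n. \<bar>y i - x i\<bar> < d})"

lemma eventually_nb:
  "eventually P (nb n x) \<longleftrightarrow> (\<exists>d>0. \<forall>y. (\<forall>i<n. \<bar>y i - x i\<bar> < d) \<longrightarrow> P y)"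
proof -
  have "eventually P (nb n x) \<longleftrightarrow>
      (\<exists>d\<in>{0<..}. eventually P (principal {y. \<forall>i<n. \<bar>y i - x i\<bar> < (d::real)}))"
    unfolding nb_def
  proof (rule eventually_INF_base)
    fix a b :: real assume "a \<in> {0<..}" "b \<in> {0<..}"
    then show "\<exists>d\<in>{0<..}. principal {y. \<forall>i<n. \<bar>y i - x i\<bar> < d} \<le>
        inf (principal {y. \<forall>i<n. \<bar>y i - x i\<bar> < a}) (principal {y. \<forall>i<n. \<bar>y i - x i\<bar> < b})"
      by (intro bexI[of _ "min a b"]) auto
  qed auto
  then show ?thesis by (auto simp: eventually_principal)
qed

lemma cont_n_iff: "cont_n n g \<longleftrightarrow> (\<forall>x. (g \<longlongrightarrow> g x) (nb n x))"
  unfolding cont_n_def tendsto_iff eventually_nb dist_real_def by blast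

lemma tendsto_nb_coord: "i < n \<Longrightarrow> ((\<lambda>y. y i) \<longlongrightarrow> x i) (nb n x)"
  unfolding tendsto_iff eventually_nb dist_real_def by blast

inductive_set coord_smooth :: "nat \<Rightarrow> ((nat \<Rightarrow> real) \<Rightarrow> real) set" for n where
  coord_smooth_const: "(\<lambda>z. c) \<in> coord_smooth n"
| coord_smooth_coord: "smooth_R g \<Longrightarrow> i < n \<Longrightarrow> (\<lambda>z. g (z i)) \<in> coord_smooth n"
| coord_smooth_add: "f \<in> coord_smooth n \<Longrightarrow> g \<in> coord_smooth n \<Longrightarrow> (\<lambda>z. f z + g z) \<in> coord_smooth n"
| coord_smooth_mult: "f \<in> coord_smooth n \<Longrightarrow> g \<in> coord_smooth n \<Longrightarrow> (\<lambda>z. f z * g z) \<in> coord_smooth n"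

definition has_partials :: "nat \<Rightarrow> ((nat \<Rightarrow> real) \<Rightarrow> real) \<Rightarrow> bool" where
  "has_partials n f \<longleftrightarrow>
     (\<forall>i<n. \<forall>x. ((\<lambda>t. f (x(i := t))) has_real_derivative pdiff i f x) (at (x i)))"

lemma has_partials_add:
  assumes "has_partials n f" "has_partials n g"
  shows "has_partials n (\<lambda>z. f z + g z)"
    and "i < n \<Longrightarrow> pdiff i (\<lambda>z. f z + g z) = (\<lambda>z. pdiff i f z + pdiff i g z)"
proof -
  have D: "((\<lambda>t. f (x(i := t)) + g (x(i := t))) has_real_derivative pdiff i f x + pdiff i g x) (at (x i))"
    if "i < n" for i x
  proof -
    have "((\<lambda>t. f (x(i := t))) has_real_derivative pdiff i f x) (at (x i))"
      "((\<lambda>t. g (x(i := t))) has_real_derivative pdiff i g x) (at (x i))"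
      using assms that unfolding has_partials_def by blast+
    then show ?thesis by (rule DERIV_add)
  qed
  have P: "pdiff i (\<lambda>z. f z + g z) = (\<lambda>z. pdiff i f z + pdiff i g z)" if "i < n" for i
    using D[OF that] unfolding pdiff_def[of i "\<lambda>z. f z + g z"] by (auto simp: fun_eq_iff intro!: DERIV_imp_deriv)
  then show "i < n \<Longrightarrow> pdiff i (\<lambda>z. f z + g z) = (\<lambda>z. pdiff i f z + pdiff i g z)" .
  from D P show "has_partials n (\<lambda>z. f z + g z)" unfolding has_partials_def by simp
qed

lemma has_partials_mult:
  assumes "has_partials n f" "has_partials n g"
  shows "has_partials n (\<lambda>z. f z * g z)"
    and "i < n \<Longrightarrow> pdiff i (\<lambda>z. f z * g z) = (\<lambda>z. pdiff i f z * g z + pdiff i g z * f z)"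
proof -
  have D: "((\<lambda>t. f (x(i := t)) * g (x(i := t))) has_real_derivative pdiff i f x * g x + pdiff i g x * f x)
      (at (x i))" if "i < n" for i x
  proof -
    have "((\<lambda>t. f (x(i := t))) has_real_derivative pdiff i f x) (at (x i))"
      "((\<lambda>t. g (x(i := t))) has_real_derivative pdiff i g x) (at (x i))"
      using assms that unfolding has_partials_def by blast+
    from DERIV_mult[OF this] show ?thesis by simp
  qed
  have P: "pdiff i (\<lambda>z. f z * g z) = (\<lambda>z. pdiff i f z * g z + pdiff i g z * f z)" if "i < n" for i
    using D[OF that] unfolding pdiff_def[of i "\<lambda>z. f z * g z"] by (auto simp: fun_eq_iff intro!: DERIV_imp_deriv)
  then show "i < n \<Longrightarrow> pdiff i (\<lambda>z. f z * g z) = (\<lambda>z. pdiff i f z * g z + pdiff i g z * f z)" .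
  from D P show "has_partials n (\<lambda>z. f z * g z)" unfolding has_partials_def by simp
qed

lemma coord_smooth_props:
  assumes "f \<in> coord_smooth n"
  shows "(\<forall>x y. (\<forall>i<n. x i = y i) \<longrightarrow> f x = f y) \<and> (\<forall>x. (f \<longlongrightarrow> f x) (nb n x)) \<and>
    has_partials n f \<and> (\<forall>i<n. pdiff i f \<in> coord_smooth n)"
  using assms
proof (induction rule: coord_smooth.induct)
  case (coord_smooth_const c)
  have "pdiff i (\<lambda>z. c) = (\<lambda>z. 0)" for i unfolding pdiff_def by simp
  then show ?case by (auto simp: has_partials_def intro: coord_smooth.coord_smooth_const)
next
  case (coord_smooth_coord g j)
  have p: "pdiff i (\<lambda>z. g (z j)) = (if i = j then (\<lambda>z. deriv g (z i)) else (\<lambda>z. 0))" for i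
    unfolding pdiff_def by (auto simp: fun_eq_iff)
  have "has_partials n (\<lambda>z. g (z j))"
    unfolding has_partials_def p using smooth_R_DERIV[OF coord_smooth_coord(1)] by simp
  moreover have "((\<lambda>y. g (y j)) \<longlongrightarrow> g (x j)) (nb n x)" for x
    using isCont_tendsto_compose[OF smooth_R_isCont[OF coord_smooth_coord(1)] tendsto_nb_coord[OF coord_smooth_coord(2)]] .
  ultimately show ?case using p coord_smooth_coord
    by (auto intro: coord_smooth.coord_smooth_const coord_smooth.coord_smooth_coord smooth_R_deriv)
next
  case (coord_smooth_add f g)
  have "\<forall>i<n. pdiff i (\<lambda>z. f z + g z) \<in> coord_smooth n"
    using coord_smooth_add.IH has_partials_add(2)[of n f g]
    by (simp add: coord_smooth.coord_smooth_add)
  moreover have "\<forall>x y. (\<forall>i<n. x i = y i) \<longrightarrow> f x + g x = f y + g y"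
    using coord_smooth_add.IH by metis
  ultimately show ?case using coord_smooth_add.IH has_partials_add(1)[of n f g]
    by (blast intro: tendsto_add)
next
  case (coord_smooth_mult f g)
  have "\<forall>i<n. pdiff i (\<lambda>z. f z * g z) \<in> coord_smooth n"
    using coord_smooth_mult.IH coord_smooth_mult.hyps has_partials_mult(2)[of n f g]
    by (simp add: coord_smooth.coord_smooth_add coord_smooth.coord_smooth_mult)
  moreover have "\<forall>x y. (\<forall>i<n. x i = y i) \<longrightarrow> f x * g x = f y * g y"
    using coord_smooth_mult.IH by metis
  ultimately show ?case using coord_smooth_mult.IH has_partials_mult(1)[of n f g]
    by (blast intro: tendsto_mult)
qed

lemma coord_smooth_imp_smooth_Rn:
  assumes "f \<in> coord_smooth n" shows "smooth_Rn n f"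
proof -
  have "foldr pdiff is f \<in> coord_smooth n" if "set is \<subseteq> {..<n}" for "is"
    using that by (induction "is") (use assms coord_smooth_props in auto)
  then show ?thesis
    using coord_smooth_props[OF assms] coord_smooth_props
    unfolding smooth_Rn_def cont_n_iff has_partials_def real_differentiable_def by blast
qed

lemma coord_smooth_scale: "smooth_R g \<Longrightarrow> i < n \<Longrightarrow> (\<lambda>z. g (c * z i)) \<in> coord_smooth n"
  using coord_smooth_coord[of "\<lambda>y. g (c * y)"] smooth_R_scale by blast

lemma coord_smooth_id: "i < n \<Longrightarrow> (\<lambda>z. z i) \<in> coord_smooth n"
  using coord_smooth_coord[of "\<lambda>y. y"] smooth_R_linear[of 1 0] by simp

lemma coord_smooth_cmult: "f \<in> coord_smooth n \<Longrightarrow> (\<lambda>z. c * f z) \<in> coord_smooth n"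
  using coord_smooth_mult[OF coord_smooth_const] by blast

lemma coord_smooth_diff: "f \<in> coord_smooth n \<Longrightarrow> g \<in> coord_smooth n \<Longrightarrow> (\<lambda>z. f z - g z) \<in> coord_smooth n"
  using coord_smooth_add[of f n "\<lambda>z. (-1) * g z"] coord_smooth_cmult[of g n "-1"] by simp

lemma coord_smooth_sum:
  "finite A \<Longrightarrow> (\<And>k. k \<in> A \<Longrightarrow> f k \<in> coord_smooth n) \<Longrightarrow> (\<lambda>z. \<Sum>k\<in>A. f k z) \<in> coord_smooth n"
  by (induction A rule: finite_induct) (auto intro: coord_smooth_const coord_smooth_add)

section \<open>Pulling back Lagerberg forms along rays\<close>

text \<open>The coefficient of the pullback of \<eta> along the ray t \<mapsto> t C(e), C(e) \<in> Z^n, where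
  C k e is the k-th coordinate of C(e).\<close>

definition ray_pullback :: "nat \<Rightarrow> nat \<Rightarrow> nat \<Rightarrow> (nat \<Rightarrow> 'e \<Rightarrow> int) \<Rightarrow>
    (nat \<Rightarrow> nat \<Rightarrow> (nat \<Rightarrow> real) \<Rightarrow> real) \<Rightarrow> 'e \<Rightarrow> real \<Rightarrow> real" where
  "ray_pullback p q n C \<eta> e t = (\<Sum>i\<in>idx p n. \<Sum>j\<in>idx q n.
        (if p = 1 then real_of_int (C i e) else 1) * (if q = 1 then real_of_int (C j e) else 1) *
          \<eta> i j (\<lambda>k. real_of_int (C k e) * t))"

lemma idx_simps: "idx 0 n = {0}" "idx (Suc 0) n = {..<n}" "idx 1 n = {..<n}"
  unfolding idx_def by simp_all

lemma pq_pow: "p \<in> {0, 1} \<Longrightarrow> q \<in> {0, 1} \<Longrightarrow>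
   (if p = 1 then x else 1) * (if q = 1 then x else 1) = (x::real) ^ (p + q)"
  by auto

lemma ray_pullback_axis_ray:
  assumes C: "\<And>k. real_of_int (C k e) = (if k = k0 then c else 0)" and k0: "k0 < n"
    and pq: "p \<in> {0, 1}" "q \<in> {0, 1}"
  shows "ray_pullback p q n C \<eta> e t =
    c ^ (p + q) * \<eta> (if p = 1 then k0 else 0) (if q = 1 then k0 else 0) (\<lambda>k. if k = k0 then c * t else 0)"
proof -
  have z: "(\<lambda>k. real_of_int (C k e) * t) = (\<lambda>k. if k = k0 then c * t else 0)" using C by auto
  have delta: "(\<Sum>i<n. real_of_int (C i e) * f i) = c * f k0" for f :: "nat \<Rightarrow> real"
  proof -
    have "(\<Sum>i<n. real_of_int (C i e) * f i) = (\<Sum>i<n. if i = k0 then c * f k0 else 0)"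
      using C by (intro sum.cong) auto
    then show ?thesis using k0 by simp
  qed
  from pq consider "p = 0" "q = 0" | "p = 1" "q = 0" | "p = 0" "q = 1" | "p = 1" "q = 1" by auto
  then show ?thesis
  proof cases
    case 4
    have "(\<Sum>i<n. \<Sum>j<n. real_of_int (C i e) * real_of_int (C j e) * \<eta> i j (\<lambda>k. if k = k0 then c * t else 0))
        = (\<Sum>i<n. real_of_int (C i e) * (\<Sum>j<n. real_of_int (C j e) * \<eta> i j (\<lambda>k. if k = k0 then c * t else 0)))"
      by (simp add: sum_distrib_left mult.assoc)
    then show ?thesis using 4 by (simp add: ray_pullback_def z idx_simps delta power2_eq_square)
  qed (simp_all add: ray_pullback_def z idx_simps delta)
qed

definition unit_coeffs :: "'e list \<Rightarrow> nat \<Rightarrow> 'e \<Rightarrow> int" where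
  "unit_coeffs es k e = (if k < length es \<and> es ! k = e then 1 else 0)"

lemma ray_pullback_unit_coeffs:
  assumes es: "distinct es" and F: "\<forall>e\<in>set es. smooth_R (F e)" and pq: "p \<in> {0, 1}" "q \<in> {0, 1}"
    and c0: "p = 0 \<and> q = 0 \<Longrightarrow> \<forall>e\<in>set es. F e 0 = c0"
  shows "\<exists>\<eta>. lagerberg_smooth (length es) p q \<eta> \<and>
     (\<forall>e\<in>set es. \<forall>t. ray_pullback p q (length es) (unit_coeffs es) \<eta> e t = F e t) \<and>
     (p = 0 \<and> q = 0 \<longrightarrow> \<eta> 0 0 (\<lambda>k. 0) = c0)"
proof -
  define n where "n = length es"
  have Fk: "(\<lambda>z. F (es ! k) (z k)) \<in> coord_smooth n" if "k < n" for k
    using F that unfolding n_def by (intro coord_smooth_coord) auto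
  define \<eta> where "\<eta> i j z = (if p = 0 \<and> q = 0 then c0 + (\<Sum>k<n. F (es ! k) (z k) - c0)
      else if i = j \<or> p + q = 1 then F (es ! max i j) (z (max i j)) else 0)" for i j z
  have "lagerberg_smooth n p q \<eta>"
    unfolding lagerberg_smooth_def
  proof (intro ballI)
    fix i j assume "i \<in> idx p n" "j \<in> idx q n"
    then have "max i j < n \<or> p = 0 \<and> q = 0" using pq by (auto simp: idx_def)
    then show "smooth_Rn n (\<eta> i j)" unfolding \<eta>_def
      by (cases "p = 0 \<and> q = 0"; cases "i = j \<or> p + q = 1")
        (auto intro!: coord_smooth_imp_smooth_Rn coord_smooth_const coord_smooth_add coord_smooth_sum
          coord_smooth_diff Fk)
  qed
  moreover have "ray_pullback p q n (unit_coeffs es) \<eta> e t = F e t" if "e \<in> set es" for e t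
  proof -
    obtain k0 where k0: "k0 < n" "e = es ! k0"
      using \<open>e \<in> set es\<close> unfolding n_def by (auto simp: in_set_conv_nth)
    have "real_of_int (unit_coeffs es k (es ! k0)) = (if k = k0 then 1 else 0)" for k
      using es k0(1) unfolding unit_coeffs_def n_def by (auto simp: nth_eq_iff_index_eq)
    moreover have "(\<Sum>k<n. F (es ! k) (if k = k0 then t else 0) - c0) = F (es ! k0) t - c0"
      if "p = 0 \<and> q = 0"
    proof -
      have "(\<Sum>k<n. F (es ! k) (if k = k0 then t else 0) - c0) =
          (\<Sum>k<n. if k = k0 then F (es ! k0) t - c0 else 0)"
        using c0[OF that] nth_mem by (intro sum.cong) (auto simp: n_def)
      then show ?thesis using k0(1) by simp
    qed
    ultimately show ?thesis using k0 pq
      by (subst ray_pullback_axis_ray[where c = 1]) (auto simp: \<eta>_def cong: if_cong)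
  qed
  moreover have "p = 0 \<and> q = 0 \<longrightarrow> \<eta> 0 0 (\<lambda>k. 0) = c0"
    using c0 nth_mem unfolding \<eta>_def n_def by (auto intro!: sum.neutral)
  ultimately show ?thesis unfolding n_def by blast
qed

definition twin_coeffs :: "'e \<Rightarrow> 'e \<Rightarrow> nat \<Rightarrow> nat \<Rightarrow> nat \<Rightarrow> 'e \<Rightarrow> int" where
  "twin_coeffs e1 e2 w1 w2 k e = (if e = e1 then int w2 else if e = e2 then - int w1 else 0)"

text \<open>The hypothesis is the valency-two condition: it makes the two halves have the same jet at 0.\<close>

lemma smooth_R_glue_rescaled:
  fixes a b :: real and m :: nat
  assumes a: "a > 0" and b: "b > 0" and F1: "smooth_R F1" and F2: "smooth_R F2"
    and jets: "\<And>k. a ^ k * (a ^ m * (deriv ^^ k) F1 0) = (-1) ^ k * b ^ k * ((-1) ^ m * b ^ m * (deriv ^^ k) F2 0)"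
  shows "smooth_R (\<lambda>y. if 0 \<le> y then F1 (y / b) / b ^ m else (-1) ^ m * F2 (- y / a) / a ^ m)"
proof -
  define f1 where "f1 = (\<lambda>y. (1 / b ^ m) * F1 ((1 / b) * y + 0))"
  define f2 where "f2 = (\<lambda>y. ((-1) ^ m / a ^ m) * F2 ((-1 / a) * y + 0))"
  have s1: "smooth_R f1" unfolding f1_def by (rule smooth_R_affine[OF F1])
  have s2: "smooth_R f2" unfolding f2_def by (rule smooth_R_affine[OF F2])
  have J: "(deriv ^^ k) f1 0 = (deriv ^^ k) f2 0" for k
  proof -
    define X1 where "X1 = (deriv ^^ k) F1 0"
    define X2 where "X2 = (deriv ^^ k) F2 0"
    have h: "a ^ k * (a ^ m * X1) = (-1) ^ k * b ^ k * ((-1) ^ m * b ^ m * X2)"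
      using jets[of k] unfolding X1_def X2_def .
    have "(deriv ^^ k) f1 0 = (1 / b ^ m) * (1 / b) ^ k * X1"
      unfolding f1_def deriv_funpow_affine[OF F1] X1_def by simp
    also have "\<dots> = X1 / (b ^ m * b ^ k)" by (simp add: power_one_over)
    also have "X1 = (-1) ^ k * b ^ k * ((-1) ^ m * b ^ m * X2) / (a ^ k * a ^ m)"
      using h a by (simp add: field_simps)
    also have "(-1) ^ k * b ^ k * ((-1) ^ m * b ^ m * X2) / (a ^ k * a ^ m) / (b ^ m * b ^ k)
        = ((-1) ^ m / a ^ m) * (-1 / a) ^ k * X2"
    proof -
      have pw: "(-1 / a) ^ k = (-1) ^ k / a ^ k" by (rule power_divide)
      have "b ^ m > 0" "b ^ k > 0" "a ^ m > 0" "a ^ k > 0" "a \<noteq> 0" "b \<noteq> 0" using a b by auto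
      then show ?thesis unfolding pw by (simp add: field_simps)
    qed
    also have "\<dots> = (deriv ^^ k) f2 0"
      unfolding f2_def deriv_funpow_affine[OF F2] X2_def by simp
    finally show ?thesis .
  qed
  have "(\<lambda>y. if 0 \<le> y then F1 (y / b) / b ^ m else (-1) ^ m * F2 (- y / a) / a ^ m) =
      (\<lambda>y. if 0 \<le> y then f1 y else f2 y)"
    unfolding f1_def f2_def by (simp add: fun_eq_iff)
  then show ?thesis using smooth_R_glue[OF s1 s2 J] by simp
qed

lemma ray_pullback_twin_coeffs:
  assumes ne: "e1 \<noteq> e2" and w: "w1 > 0" "w2 > 0" and F1: "smooth_R (F e1)" and F2: "smooth_R (F e2)"
    and pq: "p \<in> {0, 1}" "q \<in> {0, 1}"
    and jets: "\<And>k. real w1 ^ k * (real w1 ^ (p + q) * (deriv ^^ k) (F e1) 0) =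
        (-1) ^ k * real w2 ^ k * ((-1) ^ (p + q) * real w2 ^ (p + q) * (deriv ^^ k) (F e2) 0)"
    and c0: "p = 0 \<and> q = 0 \<Longrightarrow> F e1 0 = c0"
  shows "\<exists>\<eta>. lagerberg_smooth 1 p q \<eta> \<and> (\<forall>e\<in>{e1, e2}. \<forall>t\<ge>0. ray_pullback p q 1 (twin_coeffs e1 e2 w1 w2) \<eta> e t = F e t) \<and>
     (p = 0 \<and> q = 0 \<longrightarrow> \<eta> 0 0 (\<lambda>k. 0) = c0)"
proof -
  define m where "m = p + q"
  define a where "a = real w1"
  define b where "b = real w2"
  have a: "a > 0" and b: "b > 0" using w unfolding a_def b_def by auto
  define Gl where "Gl = (\<lambda>y. if 0 \<le> y then F e1 (y / b) / b ^ m else (-1) ^ m * F e2 (- y / a) / a ^ m)"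
  have sG: "smooth_R Gl"
    unfolding Gl_def by (rule smooth_R_glue_rescaled[OF a b F1 F2]) (use jets in \<open>simp add: a_def b_def m_def\<close>)
  define \<eta> where "\<eta> = (\<lambda>(i::nat) (j::nat) (z::nat \<Rightarrow> real). Gl (z 0))"
  have i1: "idx p 1 = {0}" "idx q 1 = {0}" unfolding idx_def by auto
  have sm: "lagerberg_smooth 1 p q \<eta>" unfolding lagerberg_smooth_def i1 \<eta>_def
    using coord_smooth_imp_smooth_Rn[OF coord_smooth_coord[OF sG, of 0 1]] by simp
  have RCe: "ray_pullback p q 1 (twin_coeffs e1 e2 w1 w2) \<eta> e t = real_of_int (twin_coeffs e1 e2 w1 w2 0 e) ^ m * Gl (real_of_int (twin_coeffs e1 e2 w1 w2 0 e) * t)" for e t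
    unfolding ray_pullback_def i1 \<eta>_def m_def using pq_pow[OF pq] by simp
  have r1: "ray_pullback p q 1 (twin_coeffs e1 e2 w1 w2) \<eta> e1 t = F e1 t" if t: "t \<ge> 0" for t
  proof -
    have "real_of_int (twin_coeffs e1 e2 w1 w2 0 e1) = b" unfolding twin_coeffs_def b_def by simp
    moreover have "Gl (b * t) = (1 / b ^ m) * F e1 t" unfolding Gl_def using t b by simp
    ultimately show ?thesis unfolding RCe using b by simp
  qed
  have r2: "ray_pullback p q 1 (twin_coeffs e1 e2 w1 w2) \<eta> e2 t = F e2 t" if t: "t \<ge> 0" for t
  proof -
    have C: "real_of_int (twin_coeffs e1 e2 w1 w2 0 e2) = - a" unfolding twin_coeffs_def a_def using ne by simp
    show ?thesis
    proof (cases "t = 0")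
      case True
      have "a ^ 0 * (a ^ m * F e1 0) = (-1) ^ 0 * b ^ 0 * ((-1) ^ m * b ^ m * F e2 0)"
        using jets[of 0] unfolding a_def b_def m_def by simp
      then have h0: "a ^ m * F e1 0 = (-1) ^ m * b ^ m * F e2 0" by simp
      have sq: "(-1::real) ^ m * (-1) ^ m = 1" by (simp flip: power_mult_distrib)
      have "(-1) ^ m * (a ^ m * F e1 0) = ((-1) ^ m * (-1) ^ m) * b ^ m * F e2 0"
        unfolding h0 by (simp add: algebra_simps)
      then have "(-1) ^ m * a ^ m * F e1 0 = b ^ m * F e2 0" unfolding sq by (simp add: algebra_simps)
      then have h: "F e2 0 = (-1) ^ m * a ^ m * F e1 0 / b ^ m" using b by (simp add: field_simps)
      have pm: "(- a) ^ m = (-1) ^ m * a ^ m" by (rule power_minus)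
      have g0: "Gl (- a * 0) = (1 / b ^ m) * F e1 0" unfolding Gl_def by simp
      show ?thesis unfolding RCe C True g0 pm using h b by simp
    next
      case False
      then have "- a * t < 0" using t a by (simp add: mult_pos_pos)
      then have gl: "Gl (- a * t) = ((-1) ^ m / a ^ m) * F e2 t" unfolding Gl_def using a by simp
      have pm: "(- a) ^ m = (-1) ^ m * a ^ m" by (rule power_minus)
      have sq: "((-1::real) ^ m) * (-1) ^ m = 1" by (simp flip: power_mult_distrib)
      have am: "a ^ m \<noteq> 0" using a by simp
      have "(-1::real)^m * a^m * ((-1)^m / a^m * F e2 t) = F e2 t" using sq am by (simp add: field_simps)
      then show ?thesis unfolding RCe C pm gl .
    qed
  qed
  have R0: "\<eta> 0 0 (\<lambda>k. 0) = c0" if "p = 0 \<and> q = 0"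
    using c0[OF that] that unfolding \<eta>_def Gl_def m_def by simp
  show ?thesis using sm r1 r2 R0 by (intro exI[of _ \<eta>]) auto
qed

text \<open>For the rays es = [e_0, ..., e_n] with weights w_k: C(e_k) = w_n e_k for k < n and
  C(e_n) = -(w_0, ..., w_(n-1)), so that every coordinate is balanced. Below W = w_n and ws k = w_k.\<close>

definition star_coeffs :: "'e list \<Rightarrow> ('e \<Rightarrow> nat) \<Rightarrow> nat \<Rightarrow> 'e \<Rightarrow> int" where
  "star_coeffs es ww k e = (if k < length es - 1 \<and> e = es ! k then int (ww (es ! (length es - 1)))
     else if k < length es - 1 \<and> e = es ! (length es - 1) then - int (ww (es ! k)) else 0)"

context
  fixes es :: "'e list" and ww :: "'e \<Rightarrow> nat" and n :: nat
  assumes dist: "distinct es" and len: "length es = Suc n" and n2: "2 \<le> n"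
    and wpos: "\<forall>e\<in>set es. ww e > 0"
begin

abbreviation "W \<equiv> real (ww (es ! n))"
abbreviation "ws k \<equiv> real (ww (es ! k))"

lemma star_weight_last_pos: "W > 0" using wpos len by simp

lemma star_weight_pos: "k \<le> n \<Longrightarrow> ws k > 0" using wpos len by simp

lemma star_coeffs_nth: "k0 < n \<Longrightarrow> real_of_int (star_coeffs es ww k (es ! k0)) = (if k = k0 then W else 0)"
  unfolding star_coeffs_def using dist len by (auto simp: nth_eq_iff_index_eq)

lemma star_coeffs_last: "real_of_int (star_coeffs es ww k (es ! n)) = (if k < n then - ws k else 0)"
  unfolding star_coeffs_def using dist len by (auto simp: nth_eq_iff_index_eq)

lemma star_rays_cases: "e \<in> set es \<Longrightarrow> (\<exists>k0<n. e = es ! k0) \<or> e = es ! n"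
  using len by (auto simp: in_set_conv_nth less_Suc_eq)

lemma sum_star_rays: "(\<Sum>e\<in>set es. f e) = f (es ! n) + (\<Sum>k<n. f (es ! k))"
proof -
  have "set es = (\<lambda>j. es ! j) ` {..<Suc n}" using len by (auto simp: in_set_conv_nth image_def)
  moreover have "inj_on (\<lambda>j. es ! j) {..<Suc n}" using dist len by (intro inj_on_nth) auto
  ultimately have "(\<Sum>e\<in>set es. f e) = (\<Sum>j<Suc n. f (es ! j))" by (simp add: sum.reindex)
  then show ?thesis by (simp add: add.commute)
qed

lemma star_coeffs_balanced: "k < n \<Longrightarrow> (\<Sum>e\<in>set es. real (ww e) * real_of_int (star_coeffs es ww k e)) = 0"
proof -
  assume k: "k < n"
  have "(\<Sum>j<n. ws j * real_of_int (star_coeffs es ww k (es ! j))) = (\<Sum>j<n. if j = k then ws k * W else 0)"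
    using star_coeffs_nth by (intro sum.cong) auto
  also have "\<dots> = ws k * W" using k by simp
  finally show ?thesis unfolding sum_star_rays star_coeffs_last using k by simp
qed


lemma ray_pullback_star_coeffs_11:
  assumes F: "\<forall>e\<in>set es. smooth_R (F e)"
  shows "\<exists>\<eta>. lagerberg_smooth n 1 1 \<eta> \<and> (\<forall>e\<in>set es. \<forall>t. ray_pullback 1 1 n (star_coeffs es ww) \<eta> e t = F e t)"
proof -
  define Fk where "Fk k = F (es ! k)" for k
  have sFk: "smooth_R (Fk k)" if "k \<le> n" for k unfolding Fk_def using F that len by simp
  define D2 where "D2 t = Fk n t - (\<Sum>k<n. (ws k ^ 2 / W ^ 2) * Fk k (- (ws k / W) * t))" for t
  have sD2: "smooth_R D2" unfolding D2_def
    by (intro smooth_R_minus sFk smooth_R_sum smooth_R_cmult smooth_R_scale) auto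
  (* the correction has coefficient C_0(e) C_1(e), which vanishes on every ray but the last *)
  define \<eta> where "\<eta> i j z = (if i = j then Fk i ((1 / W) * z i) / W ^ 2 else 0) +
      (if i = 0 \<and> j = 1 then D2 (- (1 / ws 0) * z 0) / (ws 0 * ws 1) else 0)" for i j z
  have sm: "lagerberg_smooth n 1 1 \<eta>"
    unfolding lagerberg_smooth_def idx_simps
  proof (intro ballI)
    fix i j assume i: "i \<in> {..<n}" and j: "j \<in> {..<n}"
    have "(\<lambda>z. (if i = j then Fk i ((1 / W) * z i) / W ^ 2 else 0) +
      (if i = 0 \<and> j = 1 then D2 (- (1 / ws 0) * z 0) / (ws 0 * ws 1) else 0)) \<in> coord_smooth n"
    proof (intro coord_smooth_add)
      have a: "(\<lambda>z. Fk i ((1 / W) * z i)) \<in> coord_smooth n" using i by (intro coord_smooth_scale sFk) auto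
      have b: "(\<lambda>z. D2 (- (1 / ws 0) * z 0)) \<in> coord_smooth n" using n2 by (intro coord_smooth_scale sD2) auto
      show "(\<lambda>z. if i = j then Fk i ((1 / W) * z i) / W ^ 2 else 0) \<in> coord_smooth n"
        using coord_smooth_cmult[OF a, of "1 / W ^ 2"] coord_smooth_const[of 0 n]
        by (cases "i = j") (auto simp: field_simps)
      show "(\<lambda>z. if i = 0 \<and> j = 1 then D2 (- (1 / ws 0) * z 0) / (ws 0 * ws 1) else 0) \<in> coord_smooth n"
        using coord_smooth_cmult[OF b, of "1 / (ws 0 * ws 1)"] coord_smooth_const[of 0 n]
        by (cases "i = 0 \<and> j = 1") (auto simp: field_simps)
    qed
    then show "smooth_Rn n (\<eta> i j)" unfolding \<eta>_def by (intro coord_smooth_imp_smooth_Rn) simp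
  qed
  have rc: "ray_pullback 1 1 n (star_coeffs es ww) \<eta> e t = F e t" if e: "e \<in> set es" for e t
  proof -
    from star_rays_cases[OF e] show ?thesis
    proof (elim disjE exE conjE)
      fix k0 assume k0: "k0 < n" "e = es ! k0"
      have "ray_pullback 1 1 n (star_coeffs es ww) \<eta> e t = W ^ 2 * \<eta> k0 k0 (\<lambda>k. if k = k0 then W * t else 0)"
        unfolding k0(2)
        by (subst ray_pullback_axis_ray[where C = "star_coeffs es ww" and e = "es ! k0", OF star_coeffs_nth[OF k0(1)] k0(1)])
          (simp_all add: power2_eq_square)
      also have "\<dots> = F e t"
        unfolding \<eta>_def using star_weight_last_pos k0 by (simp add: Fk_def power2_eq_square)
      finally show ?thesis .
    next
      assume e: "e = es ! n"
      define z where "z = (\<lambda>k. if k < n then - ws k * t else 0)"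
      have zz: "(\<lambda>k. (if k < n then - ws k else 0) * t) = z" unfolding z_def by auto
      have inner: "(\<Sum>j<n. (- ws i) * (- ws j) * \<eta> i j z) =
          ws i ^ 2 * (Fk i ((1 / W) * z i) / W ^ 2) + (if i = 0 then ws 0 * ws 1 * (D2 (- (1 / ws 0) * z 0) / (ws 0 * ws 1)) else 0)"
        if i: "i < n" for i
      proof -
        have "(\<Sum>j<n. (- ws i) * (- ws j) * \<eta> i j z) =
           (\<Sum>j<n. (if j = i then ws i ^ 2 * (Fk i ((1 / W) * z i) / W ^ 2) else 0) +
                  (if i = 0 \<and> j = 1 then ws 0 * ws 1 * (D2 (- (1 / ws 0) * z 0) / (ws 0 * ws 1)) else 0))"
          unfolding \<eta>_def by (intro sum.cong refl) (auto simp: algebra_simps power2_eq_square)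
        also have "\<dots> = ws i ^ 2 * (Fk i ((1 / W) * z i) / W ^ 2) + (if i = 0 then ws 0 * ws 1 * (D2 (- (1 / ws 0) * z 0) / (ws 0 * ws 1)) else 0)"
          using i n2 by (simp add: sum.distrib)
        finally show ?thesis .
      qed
      have "ray_pullback 1 1 n (star_coeffs es ww) \<eta> e t = (\<Sum>i<n. \<Sum>j<n. (- ws i) * (- ws j) * \<eta> i j z)"
        unfolding ray_pullback_def idx_simps e star_coeffs_last zz by (intro sum.cong refl) auto
      also have "\<dots> = (\<Sum>i<n. ws i ^ 2 * (Fk i ((1 / W) * z i) / W ^ 2) + (if i = 0 then ws 0 * ws 1 * (D2 (- (1 / ws 0) * z 0) / (ws 0 * ws 1)) else 0))"
        using inner by (intro sum.cong) auto
      also have "\<dots> = (\<Sum>i<n. (ws i ^ 2 / W ^ 2) * Fk i (- (ws i / W) * t)) + D2 t"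
      proof -
        define A where "A i = ws i ^ 2 * (Fk i ((1 / W) * z i) / W ^ 2)" for i
        define B where "B = ws 0 * ws 1 * (D2 (- (1 / ws 0) * z 0) / (ws 0 * ws 1))"
        have a: "(\<Sum>i<n. A i) = (\<Sum>i<n. (ws i ^ 2 / W ^ 2) * Fk i (- (ws i / W) * t))"
          unfolding z_def A_def by (intro sum.cong) auto
        have b: "B = D2 t"
          using star_weight_pos[of 0] star_weight_pos[of 1] n2 unfolding z_def B_def by simp
        have "(\<Sum>i<n. A i + (if i = 0 then B else 0)) = (\<Sum>i<n. A i) + B"
          using n2 by (simp add: sum.distrib)
        then show ?thesis unfolding A_def B_def a[unfolded A_def] b[unfolded B_def] .
      qed
      also have "\<dots> = F e t" unfolding D2_def e Fk_def by simp
      finally show ?thesis .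
    qed
  qed
  show ?thesis using sm rc by blast
qed


lemma ray_pullback_star_coeffs_1:
  assumes F: "\<forall>e\<in>set es. smooth_R (F e)" and bal: "(\<Sum>e\<in>set es. real (ww e) * F e 0) = 0"
    and pq: "(p = 1 \<and> q = 0) \<or> (p = 0 \<and> q = 1)"
  shows "\<exists>\<eta>. lagerberg_smooth n p q \<eta> \<and> (\<forall>e\<in>set es. \<forall>t. ray_pullback p q n (star_coeffs es ww) \<eta> e t = F e t)"
proof -
  define Fk where "Fk k = F (es ! k)" for k
  have sFk: "smooth_R (Fk k)" if "k \<le> n" for k unfolding Fk_def using F that len by simp
  define D1 where "D1 t = Fk n t + (\<Sum>k<n. (ws k / W) * Fk k (- (ws k / W) * t))" for t
  have sD1: "smooth_R D1" unfolding D1_def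
    by (intro smooth_R_add sFk smooth_R_sum smooth_R_cmult smooth_R_scale) auto
  have D10: "D1 0 = 0"
  proof -
    have "W * Fk n 0 + (\<Sum>k<n. ws k * Fk k 0) = 0" using bal unfolding sum_star_rays Fk_def .
    then have "(1 / W) * (W * Fk n 0 + (\<Sum>k<n. ws k * Fk k 0)) = 0" by simp
    then show ?thesis unfolding D1_def using star_weight_last_pos by (simp add: algebra_simps sum_distrib_left)
  qed
  (* on a ray e_k, k < n, the correction has coefficient C_0(e_k) = 0 or is evaluated at z_1 = 0 *)
  define V where "V i z = Fk i ((1 / W) * z i) / W + (if i = 0 then - (1 / ws 0) * D1 (- (1 / ws 1) * z 1) else 0)" for i z
  have VMS: "V i \<in> coord_smooth n" if i: "i < n" for i
  proof -
    have a: "(\<lambda>z. Fk i ((1 / W) * z i)) \<in> coord_smooth n" using i by (intro coord_smooth_scale sFk) auto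
    have b: "(\<lambda>z. D1 (- (1 / ws 1) * z 1)) \<in> coord_smooth n" using n2 by (intro coord_smooth_scale sD1) auto
    have "(\<lambda>z. Fk i ((1 / W) * z i) / W + (if i = 0 then - (1 / ws 0) * D1 (- (1 / ws 1) * z 1) else 0)) \<in> coord_smooth n"
      using coord_smooth_add[OF coord_smooth_cmult[OF a, of "1 / W"] coord_smooth_cmult[OF b, of "- (1 / ws 0)"]] coord_smooth_add[OF coord_smooth_cmult[OF a, of "1 / W"] coord_smooth_const[of 0]]
      by (cases "i = 0") simp_all
    then show ?thesis unfolding V_def[abs_def] by simp
  qed
  define \<eta> where "\<eta> i j z = V (i + j) z" for i j z
  have sm: "lagerberg_smooth n p q \<eta>"
    using pq unfolding lagerberg_smooth_def \<eta>_def
    by (auto simp: idx_simps intro!: coord_smooth_imp_smooth_Rn VMS simp del: idx_simps(2) simp add: idx_def)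
  have red: "ray_pullback p q n (star_coeffs es ww) \<eta> e t = (\<Sum>i<n. real_of_int (star_coeffs es ww i e) * V i (\<lambda>k. real_of_int (star_coeffs es ww k e) * t))" for e t
    using pq unfolding ray_pullback_def \<eta>_def by (auto simp: idx_def)
  have rc: "ray_pullback p q n (star_coeffs es ww) \<eta> e t = F e t" if e: "e \<in> set es" for e t
  proof -
    from star_rays_cases[OF e] show ?thesis
    proof (elim disjE exE conjE)
      fix k0 assume k0: "k0 < n" "e = es ! k0"
      have "ray_pullback p q n (star_coeffs es ww) \<eta> e t = W * V k0 (\<lambda>k. if k = k0 then W * t else 0)"
        unfolding k0(2) using pq
        by (subst ray_pullback_axis_ray[where C = "star_coeffs es ww" and e = "es ! k0", OF star_coeffs_nth[OF k0(1)] k0(1)]) (auto simp: \<eta>_def)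
      also have "\<dots> = F e t" unfolding V_def using star_weight_last_pos k0 D10 by (auto simp: Fk_def)
      finally show ?thesis .
    next
      assume e: "e = es ! n"
      define z where "z = (\<lambda>k. if k < n then - ws k * t else 0)"
      have zz: "(\<lambda>k. (if k < n then - ws k else 0) * t) = z" unfolding z_def by auto
      define A where "A i = - ws i * (Fk i ((1 / W) * z i) / W)" for i
      have "ray_pullback p q n (star_coeffs es ww) \<eta> e t = (\<Sum>i<n. - ws i * V i z)"
        unfolding red e star_coeffs_last zz by (intro sum.cong refl) auto
      also have "\<dots> = (\<Sum>i<n. A i + (if i = 0 then - ws 0 * (- (1 / ws 0) * D1 (- (1 / ws 1) * z 1)) else 0))"
        unfolding V_def A_def by (intro sum.cong refl) (simp add: algebra_simps)
      also have "\<dots> = (\<Sum>i<n. A i) + - ws 0 * (- (1 / ws 0) * D1 (- (1 / ws 1) * z 1))"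
        using n2 by (simp add: sum.distrib)
      also have "(\<Sum>i<n. A i) = - (\<Sum>k<n. (ws k / W) * Fk k (- (ws k / W) * t))"
        unfolding A_def z_def by (simp add: sum_negf[symmetric])
      also have "- ws 0 * (- (1 / ws 0) * D1 (- (1 / ws 1) * z 1)) = D1 t"
        using star_weight_pos[of 0] star_weight_pos[of 1] n2 unfolding z_def by simp
      also have "- (\<Sum>k<n. (ws k / W) * Fk k (- (ws k / W) * t)) + D1 t = F e t"
        unfolding D1_def e Fk_def by simp
      finally show ?thesis .
    qed
  qed
  show ?thesis using sm rc by blast
qed


lemma ray_pullback_star_coeffs_00:
  assumes F: "\<forall>e\<in>set es. smooth_R (F e)" and c0: "\<forall>e\<in>set es. F e 0 = c0"
    and bal: "(\<Sum>e\<in>set es. real (ww e) * deriv (F e) 0) = 0"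
  shows "\<exists>\<eta>. lagerberg_smooth n 0 0 \<eta> \<and> (\<forall>e\<in>set es. \<forall>t. ray_pullback 0 0 n (star_coeffs es ww) \<eta> e t = F e t) \<and>
     \<eta> 0 0 (\<lambda>k. 0) = c0"
proof -
  define Fk where "Fk k = F (es ! k)" for k
  have sFk: "smooth_R (Fk k)" if "k \<le> n" for k unfolding Fk_def using F that len by simp
  have Fk0: "Fk k 0 = c0" if "k \<le> n" for k unfolding Fk_def using c0 that len by simp
  define D where "D t = Fk n t - c0 - (\<Sum>k<n. Fk k (- (ws k / W) * t) - c0)" for t
  have sD: "smooth_R D" unfolding D_def
    by (intro smooth_R_minus sFk smooth_R_sum smooth_R_const smooth_R_scale) auto
  have D0: "D 0 = 0" unfolding D_def using Fk0 by simp
  have dD: "DERIV D 0 :> deriv (Fk n) 0 - (\<Sum>k<n. deriv (Fk k) 0 * (- (ws k / W)) - 0)"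
  proof -
    have dk: "DERIV (\<lambda>t. Fk k (- (ws k / W) * t)) 0 :> deriv (Fk k) 0 * (- (ws k / W))" if "k < n" for k
    proof -
      have d: "DERIV (Fk k) (- (ws k / W) * 0) :> deriv (Fk k) 0"
        using smooth_R_DERIV[OF sFk, of k 0] that by simp
      have "DERIV (\<lambda>t. - (ws k / W) * t) 0 :> - (ws k / W)" by (rule DERIV_cmult_Id)
      from DERIV_chain2[OF d this] show ?thesis .
    qed
    have "DERIV (\<lambda>t. Fk n t - c0 - (\<Sum>k<n. Fk k (- (ws k / W) * t) - c0)) 0 :>
        deriv (Fk n) 0 - 0 - (\<Sum>k<n. deriv (Fk k) 0 * (- (ws k / W)) - 0)"
      by (intro DERIV_diff DERIV_sum smooth_R_DERIV[OF sFk] DERIV_const dk) auto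
    then show ?thesis unfolding D_def[abs_def] by simp
  qed
  have dD0: "deriv D 0 = 0"
  proof -
    have "W * deriv (Fk n) 0 + (\<Sum>k<n. ws k * deriv (Fk k) 0) = 0" using bal unfolding sum_star_rays Fk_def .
    then have "(1 / W) * (W * deriv (Fk n) 0 + (\<Sum>k<n. ws k * deriv (Fk k) 0)) = 0" by simp
    then have "deriv (Fk n) 0 - (\<Sum>k<n. deriv (Fk k) 0 * (- (ws k / W)) - 0) = 0"
      using star_weight_last_pos by (simp add: algebra_simps sum_distrib_left sum_negf)
    then show ?thesis using DERIV_imp_deriv[OF dD] by simp
  qed
  obtain E where E: "smooth_R E" "\<forall>t. D t = t * t * E t" using smooth_R_hadamard2[OF sD D0 dD0] by blast
  (* z_0 z_1 vanishes on the rays e_k, k < n; on the last ray the correction term is D *)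
  define \<eta> where "\<eta> (i::nat) (j::nat) z = c0 + (\<Sum>k<n. Fk k ((1 / W) * z k) - c0) + (1 / (ws 0 * ws 1)) * (z 0 * (z 1 * E (- (1 / ws 0) * z 0)))" for i j z
  have "(\<lambda>z. c0 + (\<Sum>k<n. Fk k ((1 / W) * z k) - c0) + (1 / (ws 0 * ws 1)) * (z 0 * (z 1 * E (- (1 / ws 0) * z 0)))) \<in> coord_smooth n"
    using n2 by (intro coord_smooth_add coord_smooth_const coord_smooth_sum coord_smooth_diff coord_smooth_scale sFk coord_smooth_cmult coord_smooth_mult coord_smooth_id E(1)) auto
  then have sm: "lagerberg_smooth n 0 0 \<eta>" unfolding lagerberg_smooth_def idx_simps \<eta>_def[abs_def]
    using coord_smooth_imp_smooth_Rn by auto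
  have rc: "ray_pullback 0 0 n (star_coeffs es ww) \<eta> e t = F e t" if e: "e \<in> set es" for e t
  proof -
    from star_rays_cases[OF e] show ?thesis
    proof (elim disjE exE conjE)
      fix k0 assume k0: "k0 < n" "e = es ! k0"
      define z where "z = (\<lambda>k. if k = k0 then W * t else 0)"
      have zk: "(\<lambda>k. (if k = k0 then W else 0) * t) = z" unfolding z_def by auto
      have s: "(\<Sum>k<n. Fk k ((1 / W) * z k) - c0) = (\<Sum>k<n. if k = k0 then Fk k0 t - c0 else 0)"
        unfolding z_def using star_weight_last_pos Fk0 by (intro sum.cong refl) auto
      have p: "z 0 * (z 1 * E (- (1 / ws 0) * z 0)) = 0" unfolding z_def by auto
      have "ray_pullback 0 0 n (star_coeffs es ww) \<eta> e t = \<eta> 0 0 z" unfolding ray_pullback_def idx_simps k0(2) star_coeffs_nth[OF k0(1)] zk by simp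
      also have "\<dots> = F e t" unfolding \<eta>_def s p using k0 by (simp add: Fk_def)
      finally show ?thesis .
    next
      assume e: "e = es ! n"
      define z where "z = (\<lambda>k. if k < n then - ws k * t else 0)"
      have zz: "(\<lambda>k. (if k < n then - ws k else 0) * t) = z" unfolding z_def by auto
      have s: "(\<Sum>k<n. Fk k ((1 / W) * z k) - c0) = (\<Sum>k<n. Fk k (- (ws k / W) * t) - c0)"
        unfolding z_def by (intro sum.cong refl) auto
      have p: "(1 / (ws 0 * ws 1)) * (z 0 * (z 1 * E (- (1 / ws 0) * z 0))) = D t"
        using E(2) star_weight_pos[of 0] star_weight_pos[of 1] n2 unfolding z_def by simp
      have "ray_pullback 0 0 n (star_coeffs es ww) \<eta> e t = \<eta> 0 0 z" unfolding ray_pullback_def idx_simps e star_coeffs_last zz by simp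
      also have "\<dots> = F e t" unfolding \<eta>_def s p by (simp add: D_def e Fk_def)
      finally show ?thesis .
    qed
  qed
  have r0: "\<eta> 0 0 (\<lambda>k. 0) = c0" unfolding \<eta>_def using Fk0 by simp
  show ?thesis using sm rc r0 by blast
qed

end

section \<open>Stars around a vertex\<close>

lemma vector_derivative_affine_on:
  assumes "a < b" "s \<in> {a..b}" "\<forall>t\<in>{a..b}. F t = c * t + d"
  shows "vector_derivative F (at s within {a..b}) = c"
proof -
  have "((\<lambda>t. c * t + d) has_real_derivative c) (at s within {a..b})"
    by (auto intro!: derivative_eq_intros)
  then have dv: "((\<lambda>t. c * t + d) has_vector_derivative c) (at s within {a..b})"
    by (simp add: has_real_derivative_iff_has_vector_derivative)
  have eq: "\<And>x. x \<in> {a..b} \<Longrightarrow> F x = c * x + d" using assms(3) by blast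
  have "(F has_vector_derivative c) (at s within {a..b})"
    by (rule has_vector_derivative_transform[OF assms(2) eq dv])
  then show ?thesis by (rule vector_derivative_within_closed_interval[OF assms(1,2)])
qed

lemma on_edge_pts: "wmg_ok G \<Longrightarrow> e \<in> edges G \<Longrightarrow> on_edge G (pts G) e = {0..len G e}"
  unfolding on_edge_def pts_def param_def wmg_ok_def by auto

lemma param_in_pts: "wmg_ok G \<Longrightarrow> e \<in> edges G \<Longrightarrow> param G e s \<in> pts G"
  unfolding pts_def param_def wmg_ok_def by auto

lemma ptval_fun_form: "ptval (fun_form G F) (param G e s) = F (param G e s)"
  by (auto simp: param_def fun_form_def)

lemma nbhd_pts: "wmg_ok G \<Longrightarrow> x \<in> pts G \<Longrightarrow> nbhd G (pts G) x"
  unfolding nbhd_def using param_in_pts by (auto intro!: exI[of _ 1])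

definition out_param :: "('v, 'e) wmg \<Rightarrow> 'v \<Rightarrow> 'e \<Rightarrow> real \<Rightarrow> real" where
  "out_param G v e t = (if tail G e = v then t else len G e - t)"

lemma out_param_out_param[simp]: "out_param G v e (out_param G v e t) = t"
  unfolding out_param_def by auto

definition star :: "('v, 'e) wmg \<Rightarrow> 'v \<Rightarrow> real \<Rightarrow> ('v, 'e) pt set" where
  "star G v r = insert (Vert v) {Inner e (out_param G v e t) | e t. e \<in> incident G v \<and> 0 < t \<and> t \<le> r}"

definition star_coord :: "('v, 'e) wmg \<Rightarrow> 'v \<Rightarrow> ('e \<Rightarrow> int) \<Rightarrow> ('v, 'e) pt \<Rightarrow> real" where
  "star_coord G v c y = (case y of Vert _ \<Rightarrow> 0
     | Inner e s \<Rightarrow> if e \<in> incident G v then real_of_int (c e) * out_param G v e s else 0)"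

definition star_radius :: "('v, 'e) wmg \<Rightarrow> 'v \<Rightarrow> real \<Rightarrow> bool" where
  "star_radius G v r \<longleftrightarrow> wmg_ok G \<and> v \<in> verts G \<and> 0 < r \<and> (\<forall>e\<in>incident G v. r < len G e)"

lemma mem_star: "y \<in> star G v r \<longleftrightarrow> y = Vert v \<or>
   (\<exists>e s. y = Inner e s \<and> e \<in> incident G v \<and> 0 < out_param G v e s \<and> out_param G v e s \<le> r)"
proof
  assume "y \<in> star G v r"
  then consider "y = Vert v" | e t where "y = Inner e (out_param G v e t)" "e \<in> incident G v" "0 < t" "t \<le> r"
    unfolding star_def by blast
  then show "y = Vert v \<or> (\<exists>e s. y = Inner e s \<and> e \<in> incident G v \<and> 0 < out_param G v e s \<and> out_param G v e s \<le> r)"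
  proof cases
    case 1 then show ?thesis by simp
  next
    case 2 then show ?thesis by (intro disjI2 exI[of _ e] exI[of _ "out_param G v e t"]) simp
  qed
next
  assume "y = Vert v \<or> (\<exists>e s. y = Inner e s \<and> e \<in> incident G v \<and> 0 < out_param G v e s \<and> out_param G v e s \<le> r)"
  then show "y \<in> star G v r"
  proof (elim disjE exE conjE)
    assume "y = Vert v" then show ?thesis unfolding star_def by simp
  next
    fix e s assume h: "y = Inner e s" "e \<in> incident G v" "0 < out_param G v e s" "out_param G v e s \<le> r"
    have "y = Inner e (out_param G v e (out_param G v e s))" using h by simp
    then show ?thesis unfolding star_def using h by blast
  qed
qed

lemma incident_edges: "e \<in> incident G v \<Longrightarrow> e \<in> edges G"
  unfolding incident_def by auto

lemma star_param_iff:
  assumes ok: "star_radius G v r" and e: "e \<in> edges G" and s: "s \<in> {0..len G e}"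
  shows "param G e s \<in> star G v r \<longleftrightarrow> e \<in> incident G v \<and> out_param G v e s \<le> r"
proof -
  have W: "tail G e \<noteq> head G e" "len G e > 0" using ok e unfolding star_radius_def wmg_ok_def by auto
  have rl: "e \<in> incident G v \<Longrightarrow> r < len G e" using ok unfolding star_radius_def by auto
  have r0: "r > 0" using ok unfolding star_radius_def by auto
  consider "s = 0" | "s = len G e" | "0 < s \<and> s < len G e" using s by fastforce
  then show ?thesis
  proof cases
    case 1
    then have "param G e s = Vert (tail G e)" unfolding param_def by simp
    then show ?thesis using 1 W rl r0 e unfolding mem_star incident_def out_param_def by auto
  next
    case 2
    then have "param G e s = Vert (head G e)" unfolding param_def using W by simp
    then show ?thesis using 2 W rl r0 e unfolding mem_star incident_def out_param_def by auto
  next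
    case 3
    then have "param G e s = Inner e s" unfolding param_def by simp
    then show ?thesis using 3 W rl r0 e unfolding mem_star out_param_def by auto
  qed
qed

lemma star_on_edge:
  assumes ok: "star_radius G v r" and e: "e \<in> edges G"
  shows "on_edge G (star G v r) e = {s\<in>{0..len G e}. e \<in> incident G v \<and> out_param G v e s \<le> r}"
  unfolding on_edge_def using star_param_iff[OF ok e] by auto

lemma star_nbhd:
  assumes ok: "star_radius G v r" shows "nbhd G (star G v r) (Vert v)"
  unfolding nbhd_def
proof (intro conjI exI[of _ r] ballI impI)
  show "Vert v \<in> star G v r" unfolding star_def by simp
  show "r > 0" using ok unfolding star_radius_def by simp
  fix e s0 s assume e: "e \<in> edges G" and s0: "s0 \<in> {0..len G e}" and s: "s \<in> {0..len G e}"
    and h: "param G e s0 = Vert v \<and> \<bar>s - s0\<bar> < r"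
  have W: "tail G e \<noteq> head G e" using ok e unfolding star_radius_def wmg_ok_def by auto
  have "(s0 = 0 \<and> tail G e = v) \<or> (s0 = len G e \<and> head G e = v)"
    using h s0 unfolding param_def by (auto split: if_splits)
  then have "e \<in> incident G v \<and> out_param G v e s \<le> r"
    using h s e W unfolding incident_def out_param_def by auto
  then show "param G e s \<in> star G v r" using star_param_iff[OF ok e s] by blast
qed

lemma star_sub_pts:
  assumes ok: "star_radius G v r" shows "star G v r \<subseteq> pts G"
proof
  fix y assume "y \<in> star G v r"
  then consider "y = Vert v" | e s where "y = Inner e s" "e \<in> incident G v" "0 < out_param G v e s" "out_param G v e s \<le> r"
    unfolding mem_star by blast
  then show "y \<in> pts G"
  proof cases
    case 1 then show ?thesis using ok unfolding star_radius_def pts_def by auto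
  next
    case 2
    have "r < len G e" using ok 2 unfolding star_radius_def by auto
    then have "0 < s \<and> s < len G e" using 2 unfolding out_param_def by (auto split: if_splits)
    then show ?thesis using 2 incident_edges[OF 2(2)] unfolding pts_def by auto
  qed
qed

lemma star_rat_subgraph:
  assumes ok: "star_radius G v r" and \<Gamma>: "add_subgroup \<Gamma>" and L: "\<forall>e\<in>edges G. len G e \<in> \<Gamma>"
    and r: "incident G v \<noteq> {} \<longrightarrow> r \<in> gbar \<Gamma>"
  shows "rat_subgraph G \<Gamma> (star G v r)"
  unfolding rat_subgraph_def
proof (intro conjI ballI)
  show "star G v r \<subseteq> pts G" by (rule star_sub_pts[OF ok])
  fix e assume e: "e \<in> edges G"
  have lg: "len G e \<in> gbar \<Gamma>" using L e subset_gbar[OF \<Gamma>] by auto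
  have rl: "e \<in> incident G v \<Longrightarrow> r < len G e" and r0: "r > 0" using ok unfolding star_radius_def by auto
  have rg: "e \<in> incident G v \<Longrightarrow> r \<in> gbar \<Gamma>" using r by blast
  define P where "P = (if e \<in> incident G v then {if tail G e = v then (0, r) else (len G e - r, len G e)} else {})"
  have "finite P" unfolding P_def by auto
  moreover have "\<forall>(a, b)\<in>P. 0 \<le> a \<and> a \<le> b \<and> b \<le> len G e \<and> a \<in> gbar \<Gamma> \<and> b \<in> gbar \<Gamma>"
    unfolding P_def using rl r0 rg lg gbar_zero[OF \<Gamma>] gbar_diff[OF \<Gamma> lg] by auto
  moreover have "on_edge G (star G v r) e = (\<Union>(a, b)\<in>P. {a..b})"
    unfolding star_on_edge[OF ok e] P_def out_param_def using rl by auto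
  ultimately show "\<exists>P. finite P \<and> (\<forall>(a, b)\<in>P. 0 \<le> a \<and> a \<le> b \<and> b \<le> len G e \<and> a \<in> gbar \<Gamma> \<and> b \<in> gbar \<Gamma>) \<and>
      on_edge G (star G v r) e = (\<Union>(a, b)\<in>P. {a..b})" by blast
qed

lemma star_coord_param:
  assumes ok: "star_radius G v r" and e: "e \<in> incident G v" and s: "s \<in> {0..len G e}" and o: "out_param G v e s \<le> r"
  shows "star_coord G v c (param G e s) = real_of_int (c e) * out_param G v e s"
proof -
  have rl: "r < len G e" using ok e unfolding star_radius_def by auto
  have e': "e \<in> edges G" by (rule incident_edges[OF e])
  have "wmg_ok G" using ok unfolding star_radius_def by simp
  then have W: "tail G e \<noteq> head G e" using e' unfolding wmg_ok_def by auto
  show ?thesis using s o rl W e unfolding star_coord_def param_def out_param_def incident_def by auto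
qed

lemma star_vert: "Vert w \<in> star G v r \<Longrightarrow> w = v"
  unfolding mem_star by auto

lemma out_fun_out_param:
  "out_fun G m f v e (out_param G v e s) = (if tail G e = v then 1 else (-1) ^ m) * f e s"
  unfolding out_fun_def out_param_def by simp

lemma snd_fun_form: "snd (fun_form G F) e s = F (param G e s)"
  by (simp add: fun_form_def)

lemma star_on_edge_interval:
  assumes ok: "star_radius G v r" and e: "e \<in> edges G" and ab: "a < b" "{a..b} \<subseteq> on_edge G (star G v r) e"
  shows "e \<in> incident G v \<and> (\<forall>s\<in>{a..b}. s \<in> {0..len G e} \<and> out_param G v e s \<le> r)"
proof -
  have "a \<in> {a..b}" using ab by simp
  then show ?thesis using ab unfolding star_on_edge[OF ok e] by blast
qed

lemma star_pullback:
  assumes ok: "star_radius G v r" and pq: "p \<in> {0, 1}" "q \<in> {0, 1}"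
   and RC: "\<forall>e\<in>incident G v. \<forall>t\<in>{0..r}. ray_pullback p q n C \<eta> e t = out_fun G (p + q) (snd \<omega>) v e t"
   and R0: "p = 0 \<and> q = 0 \<Longrightarrow> \<eta> 0 0 (\<lambda>k. 0) = fst \<omega> v"
  shows "pullback_eq G (star G v r) n (\<lambda>i. star_coord G v (C i)) p q \<eta> \<omega>"
proof (cases "p = 0 \<and> q = 0")
  case True
  have "\<eta> 0 0 (\<lambda>k. star_coord G v (C k) y) = ptval \<omega> y" if y: "y \<in> star G v r" for y
  proof -
    from y consider "y = Vert v" | e s where "y = Inner e s" "e \<in> incident G v" "0 < out_param G v e s" "out_param G v e s \<le> r"
      unfolding mem_star by blast
    then show ?thesis
    proof cases
      case 1 then show ?thesis using R0 True by (simp add: star_coord_def)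
    next
      case 2
      have "(\<lambda>k. star_coord G v (C k) y) = (\<lambda>k. real_of_int (C k e) * out_param G v e s)"
        using 2 by (simp add: star_coord_def)
      moreover have "out_param G v e s \<in> {0..r}" using 2 by simp
      note X = RC[rule_format, OF 2(2) this, unfolded ray_pullback_def]
      have "idx p n = {0}" "idx q n = {0}" using True by (simp_all add: idx_def)
      then have "\<eta> 0 0 (\<lambda>k. real_of_int (C k e) * out_param G v e s) = out_fun G 0 (snd \<omega>) v e (out_param G v e s)"
        using X True by simp
      ultimately show ?thesis using 2 by (simp add: out_fun_out_param)
    qed
  qed
  then show ?thesis using True unfolding pullback_eq_def by simp
next
  case False
  have main: "(\<Sum>i\<in>idx p n. \<Sum>j\<in>idx q n.
            (if p = 1 then vector_derivative (\<lambda>t. star_coord G v (C i) (param G e t)) (at s within {a..b}) else 1) *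
            (if q = 1 then vector_derivative (\<lambda>t. star_coord G v (C j) (param G e t)) (at s within {a..b}) else 1) *
            \<eta> i j (\<lambda>k. star_coord G v (C k) (param G e s))) = snd \<omega> e s"
    if e: "e \<in> edges G" and ab: "a < b" "{a..b} \<subseteq> on_edge G (star G v r) e" and s: "s \<in> {a..b}" for e a b s
  proof -
    note S = star_on_edge_interval[OF ok e ab]
    define A where "A = (if tail G e = v then 1 else -1::real)"
    define B where "B = (if tail G e = v then 0 else len G e)"
    have AB: "\<forall>t. out_param G v e t = A * t + B" "tail G e = v \<longrightarrow> A = 1" "tail G e \<noteq> v \<longrightarrow> A = -1"
      unfolding A_def B_def out_param_def by auto
    have hp: "star_coord G v (C i) (param G e t) = real_of_int (C i e) * out_param G v e t" if "t \<in> {a..b}" for i t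
      using S that star_coord_param[OF ok] by blast
    have sl: "vector_derivative (\<lambda>t. star_coord G v (C i) (param G e t)) (at s within {a..b}) = real_of_int (C i e) * A" for i
      using hp AB(1) by (intro vector_derivative_affine_on[OF ab(1) s]) (auto simp: algebra_simps)
    define T where "T = out_param G v e s"
    have T: "T \<in> {0..r}" using S s unfolding T_def out_param_def by auto
    (* the orientation sign A of e enters once per slot, like the sign (-1)^(p+q) in out_fun *)
    define K where "K = (if p = 1 then A else 1) * (if q = 1 then A else 1)"
    have "(\<Sum>i\<in>idx p n. \<Sum>j\<in>idx q n.
            (if p = 1 then vector_derivative (\<lambda>t. star_coord G v (C i) (param G e t)) (at s within {a..b}) else 1) *
            (if q = 1 then vector_derivative (\<lambda>t. star_coord G v (C j) (param G e t)) (at s within {a..b}) else 1) *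
            \<eta> i j (\<lambda>k. star_coord G v (C k) (param G e s))) =
          (\<Sum>i\<in>idx p n. \<Sum>j\<in>idx q n. K * ((if p = 1 then real_of_int (C i e) else 1) * (if q = 1 then real_of_int (C j e) else 1) *
          \<eta> i j (\<lambda>k. real_of_int (C k e) * T)))"
      unfolding sl hp[OF s] T_def K_def by (intro sum.cong refl) (simp add: algebra_simps)
    also have "\<dots> = K * out_fun G (p + q) (snd \<omega>) v e T"
    proof -
      have X: "(\<Sum>i\<in>idx p n. \<Sum>j\<in>idx q n. (if p = 1 then real_of_int (C i e) else 1) * (if q = 1 then real_of_int (C j e) else 1) *
          \<eta> i j (\<lambda>k. real_of_int (C k e) * T)) = out_fun G (p + q) (snd \<omega>) v e T"
        using RC S T unfolding ray_pullback_def by blast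
      show ?thesis by (simp only: sum_distrib_left[symmetric] X)
    qed
    also have "\<dots> = snd \<omega> e s"
      unfolding T_def out_fun_out_param K_def using AB pq by (cases "tail G e = v") auto
    finally show ?thesis .
  qed
  show ?thesis using False main unfolding pullback_eq_def Let_def by auto
qed

lemma finite_incident: "wmg_ok G \<Longrightarrow> finite (incident G v)"
  unfolding wmg_ok_def incident_def by auto

lemma exists_star_radius:
  assumes ok: "wmg_ok G" and \<Gamma>: "add_subgroup \<Gamma>" and L: "\<forall>e\<in>edges G. len G e \<in> \<Gamma>"
    and v: "v \<in> verts G" and e: "\<epsilon> > 0"
  shows "\<exists>r. star_radius G v r \<and> r < \<epsilon> \<and> (incident G v \<noteq> {} \<longrightarrow> r \<in> gbar \<Gamma>)"
proof (cases "incident G v = {}")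
  case True
  then show ?thesis using ok v e unfolding star_radius_def by (intro exI[of _ "\<epsilon> / 2"]) auto
next
  case False
  define m where "m = Min (len G ` incident G v)"
  have fin: "finite (len G ` incident G v)" using finite_incident[OF ok] by simp
  have pos: "\<forall>e\<in>incident G v. len G e > 0" using ok unfolding wmg_ok_def incident_def by auto
  have m0: "m > 0" unfolding m_def using fin False pos by (subst Min_gr_iff) auto
  obtain e0 where e0: "e0 \<in> incident G v" using False by blast
  have "len G e0 \<in> \<Gamma>" using L incident_edges[OF e0] by blast
  then obtain r where r: "r \<in> gbar \<Gamma>" "0 < r" "r < min \<epsilon> m"
    using gbar_small_positive[OF \<Gamma> _ pos[rule_format, OF e0], of "min \<epsilon> m"] m0 e by auto
  have "r < len G e" if "e \<in> incident G v" for e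
  proof -
    have "m \<le> len G e" unfolding m_def using fin that by (intro Min_le) auto
    then show ?thesis using r by simp
  qed
  then show ?thesis using r ok v unfolding star_radius_def by (intro exI[of _ r]) auto
qed

lemma star_coord_on_edge:
  assumes ok: "star_radius G v r" and e: "e \<in> edges G"
    and ab: "a < b" "{a..b} \<subseteq> on_edge G (star G v r) e" and s: "s \<in> {a..b}"
  shows "star_coord G v c (param G e s) =
    (if tail G e = v then real_of_int (c e) * s else - real_of_int (c e) * s + real_of_int (c e) * len G e)"
  using star_on_edge_interval[OF ok e ab] s star_coord_param[OF ok]
  by (auto simp: out_param_def algebra_simps)

text \<open>Since all weights are positive, this also covers valencies one (c = 0) and two.\<close>

definition balanced_at :: "('v, 'e) wmg \<Rightarrow> 'v \<Rightarrow> ('e \<Rightarrow> int) \<Rightarrow> bool" where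
  "balanced_at G v c \<longleftrightarrow>
     (v \<notin> bdry G \<longrightarrow> (\<Sum>e\<in>incident G v. real (wt G e) * real_of_int (c e)) = 0)"

lemma star_coord_vertex_cond:
  assumes ok: "star_radius G v r" and bal: "balanced_at G v c" and v: "v \<notin> bdry G"
  shows "vertex_cond G 0 0 (snd (fun_form G (star_coord G v c))) v"
proof -
  let ?I = "incident G v" and ?w = "\<lambda>e. real (wt G e)"
  have rl: "\<And>e. e \<in> ?I \<Longrightarrow> r < len G e" and r0: "0 < r" using ok unfolding star_radius_def by auto
  have w: "?w e > 0" if "e \<in> ?I" for e
    using ok that unfolding star_radius_def wmg_ok_def incident_def by auto
  have sum0: "(\<Sum>e\<in>?I. ?w e * real_of_int (c e)) = 0" using bal v unfolding balanced_at_def by blast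
  have one: "real_of_int (c e) = 0" if c1: "card ?I = 1" and e: "e \<in> ?I" for e
  proof -
    obtain x where "?I = {x}" using c1 card_1_singleton_iff[of ?I] by auto
    then have "?I = {e}" using e by simp
    then show ?thesis using sum0 w[OF e] by simp
  qed
  have two: "?w e1 * real_of_int (c e1) = - (?w e2 * real_of_int (c e2))"
    if c2: "card ?I = 2" and e12: "e1 \<in> ?I" "e2 \<in> ?I" "e1 \<noteq> e2" for e1 e2
  proof -
    obtain x y where "?I = {x, y}" using c2 card_2_iff[of ?I] by auto
    then have "?I = {e1, e2}" using e12 by auto
    then show ?thesis using sum0 e12(3) by simp
  qed
  have out: "real_of_int (c e) * s = out_fun G (0 + 0) (snd (fun_form G (star_coord G v c))) v e s"
    if e: "e \<in> ?I" and s: "s \<in> {0..r}" for e s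
  proof -
    have "out_param G v e s \<in> {0..len G e}" "out_param G v e (out_param G v e s) \<le> r"
      using s rl[OF e] unfolding out_param_def by auto
    from star_coord_param[OF ok e this, of c] show ?thesis
      using out_fun_out_param[of G "0 + 0" _ v e "out_param G v e s"] by (simp add: snd_fun_form)
  qed
  show ?thesis unfolding vertex_cond_def Let_def
  proof (intro exI[of _ r] exI[of _ "\<lambda>e t. real_of_int (c e) * t"] conjI)
    show "\<forall>e\<in>?I. r \<le> len G e \<and> smooth_R (\<lambda>t. real_of_int (c e) * t) \<and>
        (\<forall>s\<in>{0..r}. real_of_int (c e) * s = out_fun G (0 + 0) (snd (fun_form G (star_coord G v c))) v e s)"
      using rl out smooth_R_linear[of _ 0] by (simp add: less_imp_le)
    show "card ?I = 1 \<longrightarrow> (\<forall>e\<in>?I. \<forall>s\<in>{0..r}. real_of_int (c e) * s =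
        (if 0 + 0 = 0 then real_of_int (c e) * 0 else 0))"
      using one by simp
    show "card ?I = 2 \<longrightarrow> (\<forall>e1\<in>?I. \<forall>e2\<in>?I. e1 \<noteq> e2 \<longrightarrow> (\<forall>k.
        ?w e1 ^ k * (deriv ^^ k) (\<lambda>s. ?w e1 ^ (0 + 0) * (real_of_int (c e1) * s)) 0 =
        (- 1) ^ k * ?w e2 ^ k * (deriv ^^ k) (\<lambda>s. (- 1) ^ (0 + 0) * ?w e2 ^ (0 + 0) * (real_of_int (c e2) * s)) 0))"
    proof (intro impI ballI allI)
      fix e1 e2 k assume "card ?I = 2" "e1 \<in> ?I" "e2 \<in> ?I" "e1 \<noteq> e2"
      from two[OF this] show "?w e1 ^ k * (deriv ^^ k) (\<lambda>s. ?w e1 ^ (0 + 0) * (real_of_int (c e1) * s)) 0 =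
        (- 1) ^ k * ?w e2 ^ k * (deriv ^^ k) (\<lambda>s. (- 1) ^ (0 + 0) * ?w e2 ^ (0 + 0) * (real_of_int (c e2) * s)) 0"
        by (cases "k = 1") (simp_all add: deriv_funpow_linear_at_0)
    qed
    show "3 \<le> card ?I \<longrightarrow> (0 + 0 = (0::nat) \<longrightarrow> (\<Sum>e\<in>?I. ?w e * deriv (\<lambda>t. real_of_int (c e) * t) 0) = 0) \<and>
        (0 + 0 = (1::nat) \<longrightarrow> (\<Sum>e\<in>?I. ?w e * (real_of_int (c e) * 0)) = 0)"
      using sum0 by simp
  qed (rule r0)
qed

lemma star_harmonic:
  assumes ok: "star_radius G v r" and \<Gamma>: "add_subgroup \<Gamma>" and L: "\<forall>e\<in>edges G. len G e \<in> \<Gamma>"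
    and bal: "balanced_at G v c"
  shows "ZG_harmonic G \<Gamma> (star G v r) (star_coord G v c)"
  unfolding ZG_harmonic_def smooth_form_def
proof (intro conjI ballI allI impI)
  fix e a b assume e: "e \<in> edges G" and ab: "a < b \<and> {a..b} \<subseteq> on_edge G (star G v r) e"
  note F = star_coord_on_edge[OF ok e conjunct1[OF ab] conjunct2[OF ab], of _ c]
  show "\<exists>g. smooth_R g \<and> (\<forall>s\<in>{a..b}. snd (fun_form G (star_coord G v c)) e s = g s)"
  proof (cases "tail G e = v")
    case True
    then show ?thesis using F smooth_R_linear[of "real_of_int (c e)" 0]
      by (intro exI[of _ "\<lambda>s. real_of_int (c e) * s + 0"]) (auto simp: snd_fun_form)
  next
    case False
    then show ?thesis using F smooth_R_linear[of "- real_of_int (c e)" "real_of_int (c e) * len G e"]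
      by (intro exI[of _ "\<lambda>s. - real_of_int (c e) * s + real_of_int (c e) * len G e"]) (auto simp: snd_fun_form)
  qed
  have "real_of_int (c e) * len G e \<in> \<Gamma>" "0 \<in> \<Gamma>"
    using add_subgroup_Ints_mult[OF \<Gamma>] L e \<Gamma> unfolding add_subgroup_def by auto
  then show "\<exists>c' d. c' \<in> \<int> \<and> d \<in> \<Gamma> \<and> c' * len G e + d \<in> \<Gamma> \<and>
      (\<forall>s\<in>{a..b}. star_coord G v c (param G e s) = c' * s + d)"
  proof (cases "tail G e = v")
    case True
    then show ?thesis using F \<open>real_of_int (c e) * len G e \<in> \<Gamma>\<close> \<open>0 \<in> \<Gamma>\<close>
      by (intro exI[of _ "real_of_int (c e)"] exI[of _ 0]) auto
  next
    case False
    then show ?thesis using F \<open>real_of_int (c e) * len G e \<in> \<Gamma>\<close> \<open>0 \<in> \<Gamma>\<close>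
      by (intro exI[of _ "- real_of_int (c e)"] exI[of _ "real_of_int (c e) * len G e"]) auto
  qed
next
  fix w assume "w \<in> verts G - bdry G" "nbhd G (star G v r) (Vert w)"
  then show "vertex_cond G 0 0 (snd (fun_form G (star_coord G v c))) w"
    using star_vert[of w G v r] star_coord_vertex_cond[OF ok bal] unfolding nbhd_def by blast
qed (simp add: snd_fun_form ptval_fun_form)

definition trop_chart :: "('v, 'e) wmg \<Rightarrow> real set \<Rightarrow> ('v, 'e) pt \<Rightarrow> ('v, 'e) pt set \<Rightarrow> nat \<Rightarrow>
    (nat \<Rightarrow> ('v, 'e) pt \<Rightarrow> real) \<Rightarrow> bool" where
  "trop_chart G \<Gamma> x U n h \<longleftrightarrow> nbhd G U x \<and> rat_subgraph G \<Gamma> U \<and> ZG_trop G \<Gamma> U n h"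

definition pulls_back :: "('v, 'e) wmg \<Rightarrow> ('v, 'e) pt set \<Rightarrow> nat \<Rightarrow> (nat \<Rightarrow> ('v, 'e) pt \<Rightarrow> real) \<Rightarrow>
    nat \<Rightarrow> nat \<Rightarrow> ('v, 'e) form \<Rightarrow> bool" where
  "pulls_back G U n h p q \<omega> \<longleftrightarrow> (\<exists>\<eta>. lagerberg_smooth n p q \<eta> \<and> pullback_eq G U n h p q \<eta> \<omega>)"

lemma star_trop_chart:
  assumes ok: "star_radius G v r" and \<Gamma>: "add_subgroup \<Gamma>" and L: "\<forall>e\<in>edges G. len G e \<in> \<Gamma>"
    and r: "incident G v \<noteq> {} \<longrightarrow> r \<in> gbar \<Gamma>" and bal: "\<forall>i<n. balanced_at G v (C i)"
  shows "trop_chart G \<Gamma> (Vert v) (star G v r) n (\<lambda>i. star_coord G v (C i))"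
  unfolding trop_chart_def ZG_trop_def
  using star_nbhd[OF ok] star_rat_subgraph[OF ok \<Gamma> L r] star_harmonic[OF ok \<Gamma> L] bal by blast

section \<open>Forms near a vertex\<close>

lemma smooth_form_edge_extension:
  assumes ok: "wmg_ok G" and sf: "smooth_form G (pts G) p q \<omega>" and e: "e \<in> edges G"
  shows "\<exists>g. smooth_R g \<and> (\<forall>s\<in>{0..len G e}. snd \<omega> e s = g s)"
proof -
  have "0 < len G e" using ok e unfolding wmg_ok_def by auto
  moreover have "{0..len G e} \<subseteq> on_edge G (pts G) e" using on_edge_pts[OF ok e] by simp
  ultimately show ?thesis using sf e unfolding smooth_form_def by blast
qed

lemma smooth_form_fun_at_vertex:
  assumes ok: "wmg_ok G" and sf: "smooth_form G (pts G) 0 0 \<omega>" and e: "e \<in> incident G v"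
  shows "out_fun G 0 (snd \<omega>) v e 0 = fst \<omega> v"
proof -
  have e': "e \<in> edges G" by (rule incident_edges[OF e])
  have l: "0 < len G e" "tail G e \<noteq> head G e" using ok e' unfolding wmg_ok_def by auto
  have pt: "\<forall>s\<in>{0..len G e}. snd \<omega> e s = ptval \<omega> (param G e s)"
    using sf e' on_edge_pts[OF ok e'] unfolding smooth_form_def by auto
  show ?thesis
  proof (cases "tail G e = v")
    case True
    then have "param G e 0 = Vert v" unfolding param_def by simp
    then show ?thesis unfolding out_fun_def using True pt l by simp
  next
    case False
    then have hv: "head G e = v" using e unfolding incident_def by auto
    then have "param G e (len G e) = Vert v" unfolding param_def using l by simp
    then show ?thesis unfolding out_fun_def using False pt l by simp
  qed
qed

lemma smooth_form_out_extension:
  assumes ok: "wmg_ok G" and sf: "smooth_form G (pts G) p q \<omega>" and v: "v \<in> verts G"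
  shows "\<exists>F. (\<forall>e\<in>incident G v. smooth_R (F e) \<and> (\<forall>t\<in>{0..len G e}. out_fun G (p + q) (snd \<omega>) v e t = F e t)) \<and>
     (p = 0 \<and> q = 0 \<longrightarrow> (\<forall>e\<in>incident G v. F e 0 = fst \<omega> v))"
proof -
  have "\<forall>e\<in>edges G. \<exists>g. smooth_R g \<and> (\<forall>s\<in>{0..len G e}. snd \<omega> e s = g s)"
    using smooth_form_edge_extension[OF ok sf] by blast
  then obtain Gr where Gr: "\<forall>e\<in>edges G. smooth_R (Gr e) \<and> (\<forall>s\<in>{0..len G e}. snd \<omega> e s = Gr e s)"
    by metis
  define F where "F e t = (if tail G e = v then Gr e t else (-1) ^ (p + q) * Gr e ((-1) * t + len G e))" for e t
  have sm: "smooth_R (F e)" if e: "e \<in> incident G v" for e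
  proof -
    have g: "smooth_R (Gr e)" using Gr incident_edges[OF e] by blast
    show ?thesis
    proof (cases "tail G e = v")
      case True then show ?thesis unfolding F_def[abs_def] using g by simp
    next
      case False
      have "smooth_R (\<lambda>t. (-1) ^ (p + q) * Gr e ((-1) * t + len G e))" by (rule smooth_R_affine[OF g])
      then show ?thesis unfolding F_def[abs_def] using False by simp
    qed
  qed
  have eq: "out_fun G (p + q) (snd \<omega>) v e t = F e t" if e: "e \<in> incident G v" and t: "t \<in> {0..len G e}" for e t
  proof -
    have g: "\<forall>s\<in>{0..len G e}. snd \<omega> e s = Gr e s" using Gr incident_edges[OF e] by blast
    have "len G e - t \<in> {0..len G e}" using t by auto
    then show ?thesis unfolding out_fun_def F_def using g t by auto
  qed
  have c0: "F e 0 = fst \<omega> v" if pq: "p = 0 \<and> q = 0" and e: "e \<in> incident G v" for e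
  proof -
    have "0 \<le> len G e" using ok incident_edges[OF e] unfolding wmg_ok_def by fastforce
    then have "F e 0 = out_fun G 0 (snd \<omega>) v e 0" using eq[OF e, of 0] pq by simp
    also have "\<dots> = fst \<omega> v" using smooth_form_fun_at_vertex[OF ok _ e] sf pq by simp
    finally show ?thesis .
  qed
  show ?thesis using sm eq c0 by blast
qed

lemma smooth_form_vertex_cond:
  assumes ok: "wmg_ok G" and sf: "smooth_form G (pts G) p q \<omega>" and v: "v \<in> verts G - bdry G"
  shows "vertex_cond G p q (snd \<omega>) v"
proof -
  have "nbhd G (pts G) (Vert v)" using ok v by (intro nbhd_pts) (auto simp: pts_def)
  then show ?thesis using sf v unfolding smooth_form_def by blast
qed

definition vertex_cond_with :: "('v, 'e) wmg \<Rightarrow> nat \<Rightarrow> nat \<Rightarrow> ('e \<Rightarrow> real \<Rightarrow> real) \<Rightarrow> 'v \<Rightarrow> real \<Rightarrow>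
    ('e \<Rightarrow> real \<Rightarrow> real) \<Rightarrow> bool" where
  "vertex_cond_with G p q f v \<epsilon> g \<longleftrightarrow>
    (\<forall>e\<in>incident G v. \<epsilon> \<le> len G e \<and> smooth_R (g e) \<and> (\<forall>s\<in>{0..\<epsilon>}. g e s = out_fun G (p + q) (f) v e s)) \<and>
    (card (incident G v) = 1 \<longrightarrow> (\<forall>e\<in>incident G v. \<forall>s\<in>{0..\<epsilon>}. g e s = (if p + q = 0 then g e 0 else 0))) \<and>
    (card (incident G v) = 2 \<longrightarrow> (\<forall>e1\<in>incident G v. \<forall>e2\<in>incident G v. e1 \<noteq> e2 \<longrightarrow> (\<forall>k.
            real (wt G e1) ^ k * (deriv ^^ k) (\<lambda>s. real (wt G e1) ^ (p + q) * g e1 s) 0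
          = (-1) ^ k * real (wt G e2) ^ k * (deriv ^^ k) (\<lambda>s. (-1) ^ (p + q) * real (wt G e2) ^ (p + q) * g e2 s) 0))) \<and>
    (card (incident G v) \<ge> 3 \<longrightarrow> (p + q = 0 \<longrightarrow> (\<Sum>e\<in>incident G v. real (wt G e) * deriv (g e) 0) = 0) \<and>
                        (p + q = 1 \<longrightarrow> (\<Sum>e\<in>incident G v. real (wt G e) * g e 0) = 0))"

lemma vertex_cond_iff: "vertex_cond G p q f v \<longleftrightarrow> (\<exists>\<epsilon>>0. \<exists>g. vertex_cond_with G p q f v \<epsilon> g)"
  unfolding vertex_cond_def vertex_cond_with_def Let_def by simp

text \<open>The witness g in the vertex condition may be replaced by any smooth extension F of the
  outgoing edge functions: near 0 they agree, hence so do their jets at 0.\<close>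

lemma vertex_cond_with_extension:
  assumes vc: "vertex_cond G p q f v"
    and F: "\<forall>e\<in>incident G v. smooth_R (F e) \<and> (\<forall>t\<in>{0..len G e}. out_fun G (p + q) f v e t = F e t)"
  shows "\<exists>\<epsilon>>0. vertex_cond_with G p q f v \<epsilon> F"
proof -
  obtain \<epsilon> g where \<epsilon>: "\<epsilon> > 0" and V: "vertex_cond_with G p q f v \<epsilon> g"
    using vc unfolding vertex_cond_iff by blast
  have gF: "\<forall>s\<in>{0..\<epsilon>}. g e s = F e s" and g: "smooth_R (g e)" if "e \<in> incident G v" for e
    using V F that unfolding vertex_cond_with_def by auto
  have jets: "(deriv ^^ k) (\<lambda>s. c * g e s) 0 = (deriv ^^ k) (\<lambda>s. c * F e s) 0" if "e \<in> incident G v" for e k c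
    using gF[OF that] F that \<epsilon> by (intro smooth_R_right_jets_eq smooth_R_cmult g) auto
  have "deriv (g e) 0 = deriv (F e) 0" "g e 0 = F e 0" if "e \<in> incident G v" for e
    using jets[OF that, of 1 1] gF[OF that] \<epsilon> by auto
  with V F gF jets \<epsilon> show ?thesis unfolding vertex_cond_with_def by (intro exI[of _ \<epsilon>]) auto
qed

section \<open>Charts at a vertex\<close>

definition adapted_rays :: "('v, 'e) wmg \<Rightarrow> nat \<Rightarrow> nat \<Rightarrow> 'v \<Rightarrow> nat \<Rightarrow> (nat \<Rightarrow> 'e \<Rightarrow> int) \<Rightarrow> bool" where
  "adapted_rays G p q v n C \<longleftrightarrow> (\<forall>i<n. balanced_at G v (C i)) \<and>
     (\<forall>\<omega>. smooth_form G (pts G) p q \<omega> \<longrightarrow> (\<exists>\<eta>. lagerberg_smooth n p q \<eta> \<and>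
        (\<forall>e\<in>incident G v. \<forall>t\<in>{0..len G e}. ray_pullback p q n C \<eta> e t = out_fun G (p + q) (snd \<omega>) v e t) \<and>
        (p = 0 \<and> q = 0 \<longrightarrow> \<eta> 0 0 (\<lambda>k. 0) = fst \<omega> v)))"

lemma vertex_chart:
  assumes ok: "wmg_ok G" and \<Gamma>: "add_subgroup \<Gamma>" and L: "\<forall>e\<in>edges G. len G e \<in> \<Gamma>"
    and pq: "p \<in> {0, 1}" "q \<in> {0, 1}" and v: "v \<in> verts G" and rays: "adapted_rays G p q v n C"
  shows "\<exists>U h. trop_chart G \<Gamma> (Vert v) U n h \<and>
    (\<forall>\<omega>. smooth_form G (pts G) p q \<omega> \<longrightarrow> pulls_back G U n h p q \<omega>)"
proof -
  obtain r where r: "star_radius G v r" "incident G v \<noteq> {} \<longrightarrow> r \<in> gbar \<Gamma>"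
    using exists_star_radius[OF ok \<Gamma> L v, of 1] by auto
  have "pulls_back G (star G v r) n (\<lambda>i. star_coord G v (C i)) p q \<omega>"
    if sf: "smooth_form G (pts G) p q \<omega>" for \<omega>
  proof -
    obtain \<eta> where \<eta>: "lagerberg_smooth n p q \<eta>"
      "\<forall>e\<in>incident G v. \<forall>t\<in>{0..len G e}. ray_pullback p q n C \<eta> e t = out_fun G (p + q) (snd \<omega>) v e t"
      "p = 0 \<and> q = 0 \<longrightarrow> \<eta> 0 0 (\<lambda>k. 0) = fst \<omega> v"
      using rays sf unfolding adapted_rays_def by blast
    have "\<forall>e\<in>incident G v. \<forall>t\<in>{0..r}. ray_pullback p q n C \<eta> e t = out_fun G (p + q) (snd \<omega>) v e t"
      using \<eta>(2) r(1) unfolding star_radius_def by fastforce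
    with \<eta>(1,3) show ?thesis
      unfolding pulls_back_def by (blast intro: star_pullback[OF r(1) pq])
  qed
  moreover have "trop_chart G \<Gamma> (Vert v) (star G v r) n (\<lambda>i. star_coord G v (C i))"
    using star_trop_chart[OF r(1) \<Gamma> L r(2)] rays unfolding adapted_rays_def by blast
  ultimately show ?thesis by blast
qed

lemma adapted_rays_unit_coeffs:
  assumes ok: "wmg_ok G" and v: "v \<in> verts G" and pq: "p \<in> {0, 1}" "q \<in> {0, 1}"
    and free: "v \<in> bdry G \<or> incident G v = {}" and es: "distinct es" "set es = incident G v"
  shows "adapted_rays G p q v (length es) (unit_coeffs es)"
  unfolding adapted_rays_def
proof (intro conjI allI impI)
  fix i show "balanced_at G v (unit_coeffs es i)" using free unfolding balanced_at_def by auto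
next
  fix \<omega> assume "smooth_form G (pts G) p q \<omega>"
  then obtain F where F: "\<forall>e\<in>incident G v. smooth_R (F e) \<and>
        (\<forall>t\<in>{0..len G e}. out_fun G (p + q) (snd \<omega>) v e t = F e t)"
      "p = 0 \<and> q = 0 \<longrightarrow> (\<forall>e\<in>incident G v. F e 0 = fst \<omega> v)"
    using smooth_form_out_extension[OF ok _ v] by blast
  then obtain \<eta> where "lagerberg_smooth (length es) p q \<eta>"
      "\<forall>e\<in>set es. \<forall>t. ray_pullback p q (length es) (unit_coeffs es) \<eta> e t = F e t"
      "p = 0 \<and> q = 0 \<longrightarrow> \<eta> 0 0 (\<lambda>k. 0) = fst \<omega> v"
    using ray_pullback_unit_coeffs[OF es(1) _ pq, of F "fst \<omega> v"] es(2) by auto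
  then show "\<exists>\<eta>. lagerberg_smooth (length es) p q \<eta> \<and>
      (\<forall>e\<in>incident G v. \<forall>t\<in>{0..len G e}.
        ray_pullback p q (length es) (unit_coeffs es) \<eta> e t = out_fun G (p + q) (snd \<omega>) v e t) \<and>
      (p = 0 \<and> q = 0 \<longrightarrow> \<eta> 0 0 (\<lambda>k. 0) = fst \<omega> v)"
    using F(1) es(2) by auto
qed

lemma adapted_rays_twin_coeffs:
  assumes ok: "wmg_ok G" and v: "v \<in> verts G - bdry G" and pq: "p \<in> {0, 1}" "q \<in> {0, 1}"
    and I: "incident G v = {e1, e2}" "e1 \<noteq> e2"
  shows "adapted_rays G p q v 1 (twin_coeffs e1 e2 (wt G e1) (wt G e2))"
  unfolding adapted_rays_def
proof (intro conjI allI impI)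
  fix i show "balanced_at G v (twin_coeffs e1 e2 (wt G e1) (wt G e2) i)"
    using I unfolding balanced_at_def twin_coeffs_def by simp
next
  fix \<omega> assume sf: "smooth_form G (pts G) p q \<omega>"
  obtain F where F: "\<forall>e\<in>incident G v. smooth_R (F e) \<and>
        (\<forall>t\<in>{0..len G e}. out_fun G (p + q) (snd \<omega>) v e t = F e t)"
      "p = 0 \<and> q = 0 \<longrightarrow> (\<forall>e\<in>incident G v. F e 0 = fst \<omega> v)"
    using smooth_form_out_extension[OF ok sf] v by blast
  obtain \<epsilon> where "vertex_cond_with G p q (snd \<omega>) v \<epsilon> F"
    using vertex_cond_with_extension[OF smooth_form_vertex_cond[OF ok sf v] F(1)] by blast
  then have "real (wt G e1) ^ k * (deriv ^^ k) (\<lambda>s. real (wt G e1) ^ (p + q) * F e1 s) 0 =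
      (-1) ^ k * real (wt G e2) ^ k * (deriv ^^ k) (\<lambda>s. (-1) ^ (p + q) * real (wt G e2) ^ (p + q) * F e2 s) 0"
    for k using I unfolding vertex_cond_with_def by simp
  then have jets: "real (wt G e1) ^ k * (real (wt G e1) ^ (p + q) * (deriv ^^ k) (F e1) 0) =
      (-1) ^ k * real (wt G e2) ^ k * ((-1) ^ (p + q) * real (wt G e2) ^ (p + q) * (deriv ^^ k) (F e2) 0)" for k
    using F(1) I by (simp add: deriv_funpow_cmult)
  have "wt G e1 > 0" "wt G e2 > 0" using ok I unfolding wmg_ok_def incident_def by auto
  then obtain \<eta> where "lagerberg_smooth 1 p q \<eta>"
      "\<forall>e\<in>{e1, e2}. \<forall>t\<ge>0. ray_pullback p q 1 (twin_coeffs e1 e2 (wt G e1) (wt G e2)) \<eta> e t = F e t"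
      "p = 0 \<and> q = 0 \<longrightarrow> \<eta> 0 0 (\<lambda>k. 0) = fst \<omega> v"
    using ray_pullback_twin_coeffs[OF I(2) _ _ _ _ pq jets, of "fst \<omega> v"] F I by auto
  then show "\<exists>\<eta>. lagerberg_smooth 1 p q \<eta> \<and>
      (\<forall>e\<in>incident G v. \<forall>t\<in>{0..len G e}.
        ray_pullback p q 1 (twin_coeffs e1 e2 (wt G e1) (wt G e2)) \<eta> e t = out_fun G (p + q) (snd \<omega>) v e t) \<and>
      (p = 0 \<and> q = 0 \<longrightarrow> \<eta> 0 0 (\<lambda>k. 0) = fst \<omega> v)"
    using F(1) I by auto
qed

lemma adapted_rays_star_coeffs:
  assumes ok: "wmg_ok G" and v: "v \<in> verts G - bdry G" and pq: "p \<in> {0, 1}" "q \<in> {0, 1}"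
    and es: "distinct es" "set es = incident G v" "length es = Suc n" and n: "2 \<le> n"
  shows "adapted_rays G p q v n (star_coeffs es (wt G))"
  unfolding adapted_rays_def
proof (intro conjI allI impI)
  have w: "\<forall>e\<in>set es. wt G e > 0" using ok es(2) unfolding wmg_ok_def incident_def by auto
  fix i assume "i < n"
  then show "balanced_at G v (star_coeffs es (wt G) i)"
    using star_coeffs_balanced[OF es(1,3) n w] es(2) unfolding balanced_at_def by simp
next
  have w: "\<forall>e\<in>set es. wt G e > 0" using ok es(2) unfolding wmg_ok_def incident_def by auto
  have card: "3 \<le> card (incident G v)" using es n distinct_card[OF es(1)] by simp
  fix \<omega> assume sf: "smooth_form G (pts G) p q \<omega>"
  obtain F where F: "\<forall>e\<in>incident G v. smooth_R (F e) \<and>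
        (\<forall>t\<in>{0..len G e}. out_fun G (p + q) (snd \<omega>) v e t = F e t)"
      "p = 0 \<and> q = 0 \<longrightarrow> (\<forall>e\<in>incident G v. F e 0 = fst \<omega> v)"
    using smooth_form_out_extension[OF ok sf] v by blast
  obtain \<epsilon> where "vertex_cond_with G p q (snd \<omega>) v \<epsilon> F"
    using vertex_cond_with_extension[OF smooth_form_vertex_cond[OF ok sf v] F(1)] by blast
  then have bal: "p + q = 0 \<Longrightarrow> (\<Sum>e\<in>set es. real (wt G e) * deriv (F e) 0) = 0"
    "p + q = 1 \<Longrightarrow> (\<Sum>e\<in>set es. real (wt G e) * F e 0) = 0"
    using card es(2) unfolding vertex_cond_with_def by auto
  have sF: "\<forall>e\<in>set es. smooth_R (F e)" using F(1) es(2) by simp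
  have "\<exists>\<eta>. lagerberg_smooth n p q \<eta> \<and> (\<forall>e\<in>set es. \<forall>t. ray_pullback p q n (star_coeffs es (wt G)) \<eta> e t = F e t) \<and>
      (p = 0 \<and> q = 0 \<longrightarrow> \<eta> 0 0 (\<lambda>k. 0) = fst \<omega> v)"
  proof -
    from pq consider "p = 0" "q = 0" | "(p = 1 \<and> q = 0) \<or> (p = 0 \<and> q = 1)" | "p = 1" "q = 1" by auto
    then show ?thesis
    proof cases
      case 1
      then show ?thesis using ray_pullback_star_coeffs_00[OF es(1,3) n w sF _ bal(1)] F(2) es(2) by simp
    next
      case 2
      then show ?thesis using ray_pullback_star_coeffs_1[OF es(1,3) n w sF bal(2)] by auto
    next
      case 3
      then show ?thesis using ray_pullback_star_coeffs_11[OF es(1,3) n w sF] by auto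
    qed
  qed
  then show "\<exists>\<eta>. lagerberg_smooth n p q \<eta> \<and>
      (\<forall>e\<in>incident G v. \<forall>t\<in>{0..len G e}.
        ray_pullback p q n (star_coeffs es (wt G)) \<eta> e t = out_fun G (p + q) (snd \<omega>) v e t) \<and>
      (p = 0 \<and> q = 0 \<longrightarrow> \<eta> 0 0 (\<lambda>k. 0) = fst \<omega> v)"
    using F(1) es(2) by auto
qed

lemma exists_adapted_rays:
  assumes ok: "wmg_ok G" and v: "v \<in> verts G" and pq: "p \<in> {0, 1}" "q \<in> {0, 1}"
    and not_leaf: "\<not> (v \<notin> bdry G \<and> valency G v = 1)"
  shows "\<exists>n C. adapted_rays G p q v n C"
proof -
  let ?I = "incident G v"
  have fin: "finite ?I" by (rule finite_incident[OF ok])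
  obtain es where es: "distinct es" "set es = ?I" using finite_distinct_list[OF fin] by metis
  consider "v \<in> bdry G \<or> ?I = {}" | "v \<notin> bdry G" "card ?I = 2" | "v \<notin> bdry G" "3 \<le> card ?I"
    using not_leaf fin unfolding valency_def by (cases "card ?I") (auto, linarith)
  then show ?thesis
  proof cases
    case 1
    then show ?thesis using adapted_rays_unit_coeffs[OF ok v pq _ es] by blast
  next
    case 2
    then obtain e1 e2 where "?I = {e1, e2}" "e1 \<noteq> e2" by (auto simp: card_2_iff)
    then show ?thesis using adapted_rays_twin_coeffs[OF ok _ pq] v 2 by blast
  next
    case 3
    have "length es = Suc (card ?I - 1)" using 3 distinct_card[OF es(1)] es(2) by simp
    then show ?thesis using adapted_rays_star_coeffs[OF ok _ pq es] v 3 by fastforce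
  qed
qed

section \<open>Charts at inner points of edges\<close>

definition segment :: "'e \<Rightarrow> real \<Rightarrow> real \<Rightarrow> ('v, 'e) pt set" where
  "segment e a b = {Inner e s | s. a \<le> s \<and> s \<le> b}"

definition edge_coord :: "'e \<Rightarrow> ('v, 'e) pt \<Rightarrow> real" where
  "edge_coord e y = (case y of Vert _ \<Rightarrow> 0 | Inner e' s \<Rightarrow> if e' = e then s else 0)"

lemma exists_rational_segment:
  assumes \<Gamma>: "add_subgroup \<Gamma>" and l: "l \<in> \<Gamma>" and s0: "0 < s0" "s0 < l"
  shows "\<exists>a b. a \<in> gbar \<Gamma> \<and> b \<in> gbar \<Gamma> \<and> 0 < a \<and> a < s0 \<and> s0 < b \<and> b < l"
proof -
  have "0 < min s0 (l - s0) / 2" using s0 by simp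
  then obtain r where r: "r \<in> gbar \<Gamma>" "0 < r" "r < min s0 (l - s0) / 2"
    using gbar_small_positive[OF \<Gamma> l] s0 by fastforce
  define a where "a = real_of_int (\<lceil>s0 / r\<rceil> - 1) * r"
  define b where "b = a + 2 * r"
  have ag: "a \<in> gbar \<Gamma>" unfolding a_def by (rule gbar_of_int_mult[OF \<Gamma> r(1)])
  have "a + (r + r) \<in> gbar \<Gamma>" by (intro gbar_add[OF \<Gamma>] ag r(1))
  then have bg: "b \<in> gbar \<Gamma>" unfolding b_def by (simp add: algebra_simps)
  have "s0 / r \<le> real_of_int \<lceil>s0 / r\<rceil>" by (rule le_of_int_ceiling)
  then have m1: "s0 \<le> real_of_int \<lceil>s0 / r\<rceil> * r" using pos_divide_le_eq[OF r(2)] by blast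
  have "real_of_int \<lceil>s0 / r\<rceil> < s0 / r + 1" by linarith
  then have "real_of_int \<lceil>s0 / r\<rceil> * r < (s0 / r + 1) * r" using r(2) by (rule mult_strict_right_mono)
  then have m2: "real_of_int \<lceil>s0 / r\<rceil> * r < s0 + r" using r(2) by (simp add: distrib_right)
  have "a = real_of_int \<lceil>s0 / r\<rceil> * r - r" unfolding a_def by (simp add: algebra_simps)
  then have "0 < a" "a < s0" "s0 < b" "b < l" using m1 m2 r s0 unfolding b_def by auto
  then show ?thesis using ag bg by blast
qed

lemma segment_trop_chart:
  fixes G :: "('v, 'e) wmg"
  assumes ok: "wmg_ok G" and \<Gamma>: "add_subgroup \<Gamma>" and L: "\<forall>e\<in>edges G. len G e \<in> \<Gamma>"
    and e: "e \<in> edges G" and ab: "a \<in> gbar \<Gamma>" "b \<in> gbar \<Gamma>" "0 < a" "a < s0" "s0 < b" "b < len G e"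
  shows "trop_chart G \<Gamma> (Inner e s0) (segment e a b) 1 (\<lambda>i. edge_coord e)"
proof -
  let ?U = "segment e a b :: ('v, 'e) pt set"
  have pin: "param G e s = Inner e s" if "s \<in> {a..b}" for s
    using that ab unfolding param_def by auto
  have oe: "on_edge G ?U e' = (if e' = e then {a..b} else {})" for e'
    unfolding on_edge_def segment_def param_def using ab by auto
  have hp: "edge_coord e (param G e s) = s" if "s \<in> {a..b}" for s
    using pin[OF that] unfolding edge_coord_def by simp
  have "nbhd G ?U (Inner e s0)"
    unfolding nbhd_def
  proof (intro conjI exI[of _ "min (s0 - a) (b - s0)"] ballI impI)
    show "Inner e s0 \<in> ?U" unfolding segment_def using ab by auto
    show "0 < min (s0 - a) (b - s0)" using ab by simp
    fix e' s0' s assume "e' \<in> edges G" "s0' \<in> {0..len G e'}" "s \<in> {0..len G e'}"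
      and h: "param G e' s0' = Inner e s0 \<and> \<bar>s - s0'\<bar> < min (s0 - a) (b - s0)"
    then have "e' = e" "s0' = s0" unfolding param_def by (auto split: if_splits)
    moreover have "s \<in> {a..b}" using h calculation by (simp add: abs_less_iff)
    ultimately show "param G e' s \<in> ?U" unfolding segment_def using pin by auto
  qed
  moreover have "rat_subgraph G \<Gamma> ?U"
    unfolding rat_subgraph_def
  proof (intro conjI ballI)
    show "?U \<subseteq> pts G" unfolding segment_def pts_def using ab e by auto
    fix e' assume "e' \<in> edges G"
    show "\<exists>P. finite P \<and> (\<forall>(a', b')\<in>P. 0 \<le> a' \<and> a' \<le> b' \<and> b' \<le> len G e' \<and> a' \<in> gbar \<Gamma> \<and> b' \<in> gbar \<Gamma>) \<and>
      on_edge G ?U e' = (\<Union>(a', b')\<in>P. {a'..b'})"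
      using ab unfolding oe by (intro exI[of _ "if e' = e then {(a, b)} else {}"]) auto
  qed
  moreover have "ZG_harmonic G \<Gamma> ?U (edge_coord e)"
    unfolding ZG_harmonic_def smooth_form_def
  proof (intro conjI ballI allI impI)
    fix e' a' b' assume "e' \<in> edges G" and ab': "a' < b' \<and> {a'..b'} \<subseteq> on_edge G ?U e'"
    then have "e' = e" "{a'..b'} \<subseteq> {a..b}" using oe[of e'] by (auto split: if_splits)
    then show "\<exists>g. smooth_R g \<and> (\<forall>s\<in>{a'..b'}. snd (fun_form G (edge_coord e)) e' s = g s)"
      using smooth_R_linear[of 1 0] hp by (intro exI[of _ "\<lambda>s. 1 * s + 0"]) (auto simp: snd_fun_form)
    have "0 \<in> \<Gamma>" using \<Gamma> unfolding add_subgroup_def by blast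
    then show "\<exists>c d. c \<in> \<int> \<and> d \<in> \<Gamma> \<and> c * len G e' + d \<in> \<Gamma> \<and>
        (\<forall>s\<in>{a'..b'}. edge_coord e (param G e' s) = c * s + d)"
      using hp L e \<open>e' = e\<close> \<open>{a'..b'} \<subseteq> {a..b}\<close> by (intro exI[of _ 1] exI[of _ 0]) auto
  next
    fix w assume "w \<in> verts G - bdry G" "nbhd G ?U (Vert w)"
    then show "vertex_cond G 0 0 (snd (fun_form G (edge_coord e))) w"
      unfolding nbhd_def segment_def by auto
  qed (simp add: snd_fun_form ptval_fun_form)
  ultimately show ?thesis unfolding trop_chart_def ZG_trop_def by simp
qed

lemma segment_pulls_back:
  fixes G :: "('v, 'e) wmg"
  assumes ok: "wmg_ok G" and sf: "smooth_form G (pts G) p q \<omega>" and pq: "p \<in> {0, 1}" "q \<in> {0, 1}"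
    and e: "e \<in> edges G" and ab: "0 < a" "a < b" "b < len G e"
  shows "pulls_back G (segment e a b) 1 (\<lambda>i. edge_coord e) p q \<omega>"
proof -
  let ?U = "segment e a b :: ('v, 'e) pt set"
  obtain g where g: "smooth_R g" "\<forall>s\<in>{0..len G e}. snd \<omega> e s = g s"
    using smooth_form_edge_extension[OF ok sf e] by blast
  have oe: "on_edge G ?U e' = (if e' = e then {a..b} else {})" for e'
    unfolding on_edge_def segment_def param_def using ab by auto
  have hp: "edge_coord e (param G e s) = s" if "s \<in> {a..b}" for s
    using that ab unfolding edge_coord_def param_def by auto
  have gs: "snd \<omega> e s = g s" if "s \<in> {a..b}" for s using g(2) that ab by auto
  define \<eta> where "\<eta> = (\<lambda>(i::nat) (j::nat) (z::nat \<Rightarrow> real). g (z 0))"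
  have i1: "idx p 1 = {0}" "idx q 1 = {0}" unfolding idx_def by auto
  have "lagerberg_smooth 1 p q \<eta>" unfolding lagerberg_smooth_def i1 \<eta>_def
    using coord_smooth_imp_smooth_Rn[OF coord_smooth_coord[OF g(1), of 0 1]] by simp
  moreover have "pullback_eq G ?U 1 (\<lambda>i. edge_coord e) p q \<eta> \<omega>"
  proof (cases "p = 0 \<and> q = 0")
    case True
    have "\<forall>y\<in>?U. \<eta> 0 0 (\<lambda>k. edge_coord e y) = ptval \<omega> y"
      unfolding segment_def \<eta>_def edge_coord_def using gs by auto
    then show ?thesis unfolding pullback_eq_def using True by simp
  next
    case False
    have "(\<Sum>i\<in>idx p 1. \<Sum>j\<in>idx q 1.
          (if p = 1 then vector_derivative (\<lambda>t. edge_coord e (param G e' t)) (at s within {a'..b'}) else 1) *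
          (if q = 1 then vector_derivative (\<lambda>t. edge_coord e (param G e' t)) (at s within {a'..b'}) else 1) *
          \<eta> i j (\<lambda>k. edge_coord e (param G e' s))) = snd \<omega> e' s"
      if "e' \<in> edges G" "a' < b'" "{a'..b'} \<subseteq> on_edge G ?U e'" "s \<in> {a'..b'}" for e' a' b' s
    proof -
      have ee: "e' = e" and sub: "{a'..b'} \<subseteq> {a..b}" using oe[of e'] that by (auto split: if_splits)
      have "vector_derivative (\<lambda>t. edge_coord e (param G e t)) (at s within {a'..b'}) = 1"
        using hp sub that by (intro vector_derivative_affine_on[where d = 0]) auto
      then show ?thesis unfolding ee i1 \<eta>_def using hp gs sub that by auto
    qed
    then show ?thesis unfolding pullback_eq_def Let_def using False by auto
  qed
  ultimately show ?thesis unfolding pulls_back_def by blast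
qed

lemma inner_chart:
  assumes ok: "wmg_ok G" and \<Gamma>: "add_subgroup \<Gamma>" and L: "\<forall>e\<in>edges G. len G e \<in> \<Gamma>"
    and pq: "p \<in> {0, 1}" "q \<in> {0, 1}" and e: "e \<in> edges G" and s0: "0 < s0" "s0 < len G e"
  shows "\<exists>U h. trop_chart G \<Gamma> (Inner e s0) U 1 h \<and>
    (\<forall>\<omega>. smooth_form G (pts G) p q \<omega> \<longrightarrow> pulls_back G U 1 h p q \<omega>)"
proof -
  obtain a b where ab: "a \<in> gbar \<Gamma>" "b \<in> gbar \<Gamma>" "0 < a" "a < s0" "s0 < b" "b < len G e"
    using exists_rational_segment[OF \<Gamma> _ s0] L e by blast
  have "\<forall>\<omega>. smooth_form G (pts G) p q \<omega> \<longrightarrow> pulls_back G (segment e a b) 1 (\<lambda>i. edge_coord e) p q \<omega>"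
    using segment_pulls_back[OF ok _ pq e] ab by simp
  with segment_trop_chart[OF ok \<Gamma> L e ab] show ?thesis by blast
qed

section \<open>Charts at interior leaves\<close>

lemma leaf_chart:
  fixes G :: "('v, 'e) wmg"
  assumes ok: "wmg_ok G" and \<Gamma>: "add_subgroup \<Gamma>" and L: "\<forall>e\<in>edges G. len G e \<in> \<Gamma>"
    and pq: "p \<in> {0, 1}" "q \<in> {0, 1}" and v: "v \<in> verts G - bdry G" and val: "valency G v = 1"
    and sf: "smooth_form G (pts G) p q \<omega>"
  shows "\<exists>U h. trop_chart G \<Gamma> (Vert v) U 0 h \<and> pulls_back G U 0 h p q \<omega>"
proof -
  let ?I = "incident G v"
  obtain F where F: "\<forall>e\<in>?I. smooth_R (F e) \<and> (\<forall>t\<in>{0..len G e}. out_fun G (p + q) (snd \<omega>) v e t = F e t)"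
    "p = 0 \<and> q = 0 \<longrightarrow> (\<forall>e\<in>?I. F e 0 = fst \<omega> v)"
    using smooth_form_out_extension[OF ok sf] v by blast
  obtain \<epsilon> where \<epsilon>: "\<epsilon> > 0" and V: "vertex_cond_with G p q (snd \<omega>) v \<epsilon> F"
    using vertex_cond_with_extension[OF smooth_form_vertex_cond[OF ok sf v] F(1)] by blast
  note V = V[unfolded vertex_cond_with_def]
  have Vlen: "\<forall>e\<in>?I. \<epsilon> \<le> len G e" using conjunct1[OF V] by blast
  have "card ?I = 1" using val unfolding valency_def .
  then have V1: "\<forall>e\<in>?I. \<forall>s\<in>{0..\<epsilon>}. F e s = (if p + q = 0 then F e 0 else 0)"
    using conjunct1[OF conjunct2[OF V]] by blast
  have const: "out_fun G (p + q) (snd \<omega>) v e t = (if p = 0 \<and> q = 0 then fst \<omega> v else 0)"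
    if e: "e \<in> ?I" and t: "t \<in> {0..\<epsilon>}" for e t
  proof -
    have "t \<in> {0..len G e}" using Vlen e t by auto
    then have "out_fun G (p + q) (snd \<omega>) v e t = F e t" using F(1) e by blast
    also have "\<dots> = (if p + q = 0 then F e 0 else 0)" using V1 e t by blast
    also have "\<dots> = (if p = 0 \<and> q = 0 then fst \<omega> v else 0)" using F(2) e by auto
    finally show ?thesis .
  qed
  obtain r where r: "star_radius G v r" "r < \<epsilon>" "?I \<noteq> {} \<longrightarrow> r \<in> gbar \<Gamma>"
    using exists_star_radius[OF ok \<Gamma> L _ \<epsilon>] v by blast
  define \<eta> where "\<eta> = (\<lambda>(i::nat) (j::nat) (z::nat \<Rightarrow> real). if p = 0 \<and> q = 0 then fst \<omega> v else 0)"
  have sm: "lagerberg_smooth 0 p q \<eta>"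
    unfolding lagerberg_smooth_def \<eta>_def using coord_smooth_imp_smooth_Rn[OF coord_smooth_const] by blast
  have rp: "ray_pullback p q 0 (\<lambda>i e. 0) \<eta> e t = (if p = 0 \<and> q = 0 then fst \<omega> v else 0)" for e t
    using pq by (auto simp: ray_pullback_def idx_def \<eta>_def)
  have "\<forall>e\<in>?I. \<forall>t\<in>{0..r}. ray_pullback p q 0 (\<lambda>i e. 0) \<eta> e t = out_fun G (p + q) (snd \<omega>) v e t"
  proof (intro ballI)
    fix e t assume "e \<in> ?I" "t \<in> {0..r}"
    then show "ray_pullback p q 0 (\<lambda>i e. 0) \<eta> e t = out_fun G (p + q) (snd \<omega>) v e t"
      using rp const[of e t] r(2) by auto
  qed
  then have "pullback_eq G (star G v r) 0 (\<lambda>i. star_coord G v (\<lambda>e. 0)) p q \<eta> \<omega>"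
    by (rule star_pullback[OF r(1) pq]) (simp add: \<eta>_def)
  moreover note sm
  moreover have "trop_chart G \<Gamma> (Vert v) (star G v r) 0 (\<lambda>i. star_coord G v (\<lambda>e. 0))"
    using star_trop_chart[OF r(1) \<Gamma> L r(3), of 0] by simp
  ultimately show ?thesis unfolding pulls_back_def by blast
qed

lemma uniform_chart:
  assumes ok: "wmg_ok G" and \<Gamma>: "add_subgroup \<Gamma>" and L: "\<forall>e\<in>edges G. len G e \<in> \<Gamma>"
    and pq: "p \<in> {0, 1}" "q \<in> {0, 1}" and x: "x \<in> pts G"
    and not_leaf: "\<not> (\<exists>v\<in>verts G - bdry G. x = Vert v \<and> valency G v = 1)"
  shows "\<exists>U n h. trop_chart G \<Gamma> x U n h \<and>
    (\<forall>\<omega>. smooth_form G (pts G) p q \<omega> \<longrightarrow> pulls_back G U n h p q \<omega>)"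
proof -
  from x consider v where "x = Vert v" "v \<in> verts G"
    | e s where "x = Inner e s" "e \<in> edges G" "0 < s" "s < len G e"
    unfolding pts_def by blast
  then show ?thesis
  proof cases
    case 1
    then obtain n C where "adapted_rays G p q v n C"
      using exists_adapted_rays[OF ok _ pq] not_leaf by blast
    then show ?thesis using vertex_chart[OF ok \<Gamma> L pq] 1 by blast
  next
    case 2
    then show ?thesis using inner_chart[OF ok \<Gamma> L pq] by blast
  qed
qed

theorem proposition4p10:
  fixes G :: "('v, 'e) wmg" and \<Gamma> :: "real set" and p q :: nat and x :: "('v, 'e) pt"
  assumes "wmg_ok G"
    and "add_subgroup \<Gamma>"
    and "\<forall>e\<in>edges G. len G e \<in> \<Gamma>"
    and "p \<in> {0, 1}" and "q \<in> {0, 1}"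
    and "x \<in> pts G"
  shows "(\<forall>\<omega>. smooth_form G (pts G) p q \<omega> \<longrightarrow>
            (\<exists>U n h \<eta>. nbhd G U x \<and> rat_subgraph G \<Gamma> U \<and> ZG_trop G \<Gamma> U n h \<and>
                        lagerberg_smooth n p q \<eta> \<and> pullback_eq G U n h p q \<eta> \<omega>))
       \<and> (\<not> (\<exists>v\<in>verts G - bdry G. x = Vert v \<and> valency G v = 1) \<longrightarrow>
            (\<exists>U n h. nbhd G U x \<and> rat_subgraph G \<Gamma> U \<and> ZG_trop G \<Gamma> U n h \<and>
               (\<forall>\<omega>. smooth_form G (pts G) p q \<omega> \<longrightarrow>
                  (\<exists>\<eta>. lagerberg_smooth n p q \<eta> \<and> pullback_eq G U n h p q \<eta> \<omega>))))"
proof -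
  have "\<exists>U n h. trop_chart G \<Gamma> x U n h \<and> pulls_back G U n h p q \<omega>"
    if "smooth_form G (pts G) p q \<omega>" for \<omega>
  proof (cases "\<exists>v\<in>verts G - bdry G. x = Vert v \<and> valency G v = 1")
    case True
    then show ?thesis using leaf_chart[OF assms(1-5) _ _ that] by blast
  next
    case False
    then show ?thesis using uniform_chart[OF assms] that by blast
  qed
  then show ?thesis using uniform_chart[OF assms] unfolding trop_chart_def pulls_back_def by blast
qed

end
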